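(* Let $(Y_n)_{n\ge0}$ be the stationary backward Markov process on $\mathbb{T}^n$ with initial density $\theta$ and transition kernel $Q$: $Y_0$ has density $\theta$, and given $Y_k=x$, $Y_{k+1}=x-V$ where $V$ has density $v\mapsto Q(x,v)$ on $\mathbb{R}^n$. Let $f,g\in\mathcal{L}^2(\theta)$ with $\int f\theta\,dx=\int g\theta\,dx=0$. Then $\mathbb{E}[g(Y_0)f(Y_n)]=\int f(x)(\mathcal{F}^ng)(x)\theta(x)dx\to0$ exponentially fast as $n\to\infty$: there exist $\rho\in(0,1)$ (independent of $f,g$) and $C=C(f,g)$ with $|\mathbb{E}[g(Y_0)f(Y_n)]|\le C\rho^n$ for all $n$.
   Context: Let $\mathbb{T}^n=\mathbb{R}^n/\mathbb{Z}^n$; $x\pm v$ is taken mod $\mathbb{Z}^n$. Let $L(x,v)=\frac12|v|^2-U(x)+\langle P,v\rangle$ with $U\in C^\infty(\mathbb{T}^n)$, $P\in\mathbb{R}^n$. Fix $\epsilon>0$, $h=1$. Let $\phi,\bar\phi$ (differentiable on $\mathbb{T}^n$) and $\lambda\in\mathbb{R}$ satisfy $-\epsilon\ln\int_{\mathbb{R}^n}e^{-(L(x,v)+\phi(x+v))/\epsilon}dv=\phi(x)+\lambda$ and $-\epsilon\ln\int_{\mathbb{R}^n}e^{-(L(x+v,-v)+\bar\phi(x+v))/\epsilon}dv=\bar\phi(x)+\lambda$, normalized so that $\theta=e^{-(\phi+\bar\phi)/\epsilon}$ is a probability density on $\mathbb{T}^n$. Set $\gamma(x,v)=e^{-(L(x,v)+\phi(x+v)-\phi(x)-\lambda)/\epsilon}$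 and $Q(x,v)=\theta(x-v)\gamma(x-v,v)/\theta(x)$; it is known (assumed) that $\int\gamma(x,v)dv=\int Q(x,v)dv=1$ for all $x$, that $\theta\gamma$ is holonomic, and that the positive fixed point of $\mathcal{F}$ is unique up to scaling. $(\mathcal{F}g)(x)=\int\gamma(x,v)g(x+v)dv$ and $(\mathcal{F}^*f)(x)=\int Q(x,v)f(x-v)dv$; $\mathcal{L}^2(\theta)=L^2(\mathbb{T}^n,\theta\,dx)$. *)

theory Defs
  imports "HOL-Analysis.Analysis"
begin

text \<open>The torus T^n = R^n / Z^n is modelled by Z^n-periodic functions on real^'n;
  integration over T^n is integration over the unit cube [0,1]^n.\<close>

definition int_vec :: "real^'n \<Rightarrow> bool" where
  "int_vec k \<longleftrightarrow> (\<forall>i. k $ i \<in> \<int>)"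

definition torus_fun :: "(real^'n \<Rightarrow> 'b) \<Rightarrow> bool" where
  "torus_fun h \<longleftrightarrow> (\<forall>x k. int_vec k \<longrightarrow> h (x + k) = h x)"

definition torus_integral :: "(real^'n \<Rightarrow> real) \<Rightarrow> real" where
  "torus_integral h = (LINT x : cbox 0 One | lborel. h x)"

definition partial_deriv :: "'n \<Rightarrow> (real^'n \<Rightarrow> real) \<Rightarrow> real^'n \<Rightarrow> real" where
  "partial_deriv i h x = deriv (\<lambda>t. h (x + t *\<^sub>R axis i 1)) 0"

definition smooth_fun :: "(real^'n \<Rightarrow> real) \<Rightarrow> bool" where
  "smooth_fun h \<longleftrightarrow> (\<forall>is :: 'n list. (foldr partial_deriv is h) differentiable_on UNIV)"

definition lagr :: "(real^'n \<Rightarrow> real) \<Rightarrow> real^'n \<Rightarrow> real^'n \<Rightarrow> real^'n \<Rightarrow> real" where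
  "lagr U P x v = (norm v)\<^sup>2 / 2 - U x + P \<bullet> v"

definition opF :: "(real^'n \<Rightarrow> real^'n \<Rightarrow> real) \<Rightarrow> (real^'n \<Rightarrow> real) \<Rightarrow> real^'n \<Rightarrow> real" where
  "opF \<gamma> g x = (\<integral>v. \<gamma> x v * g (x + v) \<partial>lborel)"

definition opFstar :: "(real^'n \<Rightarrow> real^'n \<Rightarrow> real) \<Rightarrow> (real^'n \<Rightarrow> real) \<Rightarrow> real^'n \<Rightarrow> real" where
  "opFstar Q f x = (\<integral>v. Q x v * f (x - v) \<partial>lborel)"

definition holonomic :: "(real^'n \<Rightarrow> real^'n \<Rightarrow> real) \<Rightarrow> bool" where
  "holonomic \<mu> \<longleftrightarrow> (\<forall>\<psi>. continuous_on UNIV \<psi> \<and> torus_fun \<psi> \<longrightarrow>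
      torus_integral (\<lambda>x. \<integral>v. \<mu> x v * \<psi> (x + v) \<partial>lborel) =
      torus_integral (\<lambda>x. \<integral>v. \<mu> x v * \<psi> x \<partial>lborel))"

definition L2_theta :: "(real^'n \<Rightarrow> real) \<Rightarrow> (real^'n \<Rightarrow> real) \<Rightarrow> bool" where
  "L2_theta \<theta> f \<longleftrightarrow> torus_fun f \<and> f \<in> borel_measurable lborel \<and>
      set_integrable lborel (cbox 0 One) (\<lambda>x. (f x)\<^sup>2 * \<theta> x)"

text \<open>E[g(Y_0) f(Y_n)] for the stationary backward Markov chain with initial density theta
  and kernel Q (Y_{k+1} = Y_k - V, V ~ Q(Y_k, .)): by the Markov property
  E[f(Y_n) | Y_0 = x] = ((F^*)^n f)(x), so the expectation is
  the integral over T^n of g(x) ((F^*)^n f)(x) theta(x).\<close>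

definition backward_corr ::
  "(real^'n \<Rightarrow> real) \<Rightarrow> (real^'n \<Rightarrow> real^'n \<Rightarrow> real) \<Rightarrow>
   (real^'n \<Rightarrow> real) \<Rightarrow> (real^'n \<Rightarrow> real) \<Rightarrow> nat \<Rightarrow> real" where
  "backward_corr \<theta> Q g f n = torus_integral (\<lambda>x. g x * ((opFstar Q ^^ n) f) x * \<theta> x)"

end

(*
  Continuity and positivity of the kernel on the compact cell give a Doeblin minorisation
  gamma x v >= m * theta (x + v) (x, x + v in the unit cell). Writing gamma x = w + nu with
  nu this minorant, nu only sees the theta-mean of h, which vanishes; Cauchy-Schwarz with
  respect to w, of mass 1 - m, together with stationarity of theta then gives the spectral gap
  ||F h||^2 <= (1 - m)^2 ||h||^2 in L^2(theta) on mean-zero functions. F is the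
  L^2(theta)-adjoint of F^* (fold R^n x R^n onto the unit cell using periodicity), so it
  preserves theta-means, E[g(Y_0) f(Y_n)] = <f, F^n g>, and by Young's inequality this is
  O((1 - m)^n).
*)
theory Submission
  imports Defs "HOL-Library.Countable"
begin

section \<open>Lebesgue integrals: unimodular changes of variables, Cauchy--Schwarz\<close>

lemma lborel_distr_unit_affine:
  fixes t :: "'a::euclidean_space" and c :: real
  assumes "\<bar>c\<bar> = 1"
  shows "distr lborel borel (\<lambda>x. t + c *\<^sub>R x) = lborel"
proof -
  have "c \<noteq> 0" using assms by auto
  from lborel_affine[OF this, of t] assms
  have "lborel = density (distr lborel borel (\<lambda>x. t + c *\<^sub>R x)) (\<lambda>_. 1)" by simp
  then show ?thesis by (simp add: density_1)
qed

lemma nn_integral_lborel_unit_affine: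
  fixes t :: "'a::euclidean_space" and c :: real
  assumes "\<bar>c\<bar> = 1" and [measurable]: "f \<in> borel_measurable borel"
  shows "(\<integral>\<^sup>+x. f x \<partial>lborel) = (\<integral>\<^sup>+x. f (t + c *\<^sub>R x) \<partial>lborel)"
  by (subst (1) lborel_distr_unit_affine[OF assms(1), symmetric]) (simp add: nn_integral_distr)

lemma nn_integral_lborel_translate:
  fixes t :: "'a::euclidean_space"
  assumes "f \<in> borel_measurable borel"
  shows "(\<integral>\<^sup>+x. f x \<partial>lborel) = (\<integral>\<^sup>+x. f (t + x) \<partial>lborel)"
  using nn_integral_lborel_unit_affine[OF _ assms, of 1 t] by simp

lemma nn_integral_lborel_reflect:
  fixes t :: "'a::euclidean_space"
  assumes "f \<in> borel_measurable borel"
  shows "(\<integral>\<^sup>+x. f x \<partial>lborel) = (\<integral>\<^sup>+x. f (t - x) \<partial>lborel)"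
  using nn_integral_lborel_unit_affine[OF _ assms, of "-1" t] by simp

lemma integral_lborel_unit_affine:
  fixes t :: "'a::euclidean_space" and c :: real and f :: "'a \<Rightarrow> real"
  assumes "\<bar>c\<bar> = 1" and [measurable]: "f \<in> borel_measurable borel"
  shows "(\<integral>x. f x \<partial>lborel) = (\<integral>x. f (t + c *\<^sub>R x) \<partial>lborel)"
  by (subst (1) lborel_distr_unit_affine[OF assms(1), symmetric]) (simp add: integral_distr)

lemma integral_lborel_translate:
  fixes t :: "'a::euclidean_space" and f :: "'a \<Rightarrow> real"
  assumes "f \<in> borel_measurable borel"
  shows "(\<integral>x. f x \<partial>lborel) = (\<integral>x. f (t + x) \<partial>lborel)"
  using integral_lborel_unit_affine[OF _ assms, of 1 t] by simp

lemma integral_lborel_reflect: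
  fixes t :: "'a::euclidean_space" and f :: "'a \<Rightarrow> real"
  assumes "f \<in> borel_measurable borel"
  shows "(\<integral>x. f x \<partial>lborel) = (\<integral>x. f (t - x) \<partial>lborel)"
  using integral_lborel_unit_affine[OF _ assms, of "-1" t] by simp

lemma integrable_lborel_translate:
  fixes f :: "'a::euclidean_space \<Rightarrow> real"
  assumes "integrable lborel f"
  shows "integrable lborel (\<lambda>v. f (t + v))"
proof -
  have [measurable]: "f \<in> borel_measurable borel"
    using borel_measurable_integrable[OF assms] by (simp add: measurable_lborel1)
  have "integrable (distr lborel borel (\<lambda>v. t + 1 *\<^sub>R v)) f"
    using assms by (simp only: lborel_distr_unit_affine[of 1 t] abs_one)
  then show ?thesis by (subst (asm) integrable_distr_eq) auto
qed

lemma borel_measurable_lborel_pair_iff: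
  "f \<in> borel_measurable (lborel \<Otimes>\<^sub>M lborel) \<longleftrightarrow>
   f \<in> borel_measurable (borel :: ('a::euclidean_space \<times> 'b::euclidean_space) measure)"
  by (simp add: lborel_prod measurable_lborel1)

lemma borel_measurable_curry1:
  assumes "case_prod \<Phi> \<in> borel_measurable (borel :: ('a::euclidean_space \<times> 'b::euclidean_space) measure)"
  shows "\<Phi> x \<in> borel_measurable borel"
  using measurable_compose[OF _ assms, of "\<lambda>y. (x, y)"] by simp

lemma borel_measurable_curry2:
  assumes "case_prod \<Phi> \<in> borel_measurable (borel :: ('a::euclidean_space \<times> 'b::euclidean_space) measure)"
  shows "(\<lambda>x. \<Phi> x y) \<in> borel_measurable borel"
  using measurable_compose[OF _ assms, of "\<lambda>x. (x, y)"] by simp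

lemma abs_mult_le_sum_squares: "\<bar>a * b\<bar> \<le> a\<^sup>2 + (b::real)\<^sup>2"
  using sum_squares_bound[of "\<bar>a\<bar>" "\<bar>b\<bar>"] mult_nonneg_nonneg[OF abs_ge_zero abs_ge_zero, of a b]
  unfolding abs_mult power2_abs by linarith

lemma weighted_integral_square_le:
  fixes w h :: "'a \<Rightarrow> real"
  assumes w_nonneg: "\<And>x. 0 \<le> w x" and w_int: "integrable M w"
    and [measurable]: "h \<in> borel_measurable M"
  shows "ennreal ((\<integral>x. w x * h x \<partial>M)\<^sup>2) \<le> ennreal (\<integral>x. w x \<partial>M) * (\<integral>\<^sup>+x. ennreal (w x * (h x)\<^sup>2) \<partial>M)"
proof -
  have [measurable]: "w \<in> borel_measurable M" using w_int by (rule borel_measurable_integrable)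
  have norm_le: "ennreal (norm (\<integral>x. w x * h x \<partial>M))
      \<le> (\<integral>\<^sup>+x. ennreal (sqrt (w x)) * ennreal (sqrt (w x) * \<bar>h x\<bar>) \<partial>M)"
  proof (cases "integrable M (\<lambda>x. w x * h x)")
    case True
    have "ennreal (norm (\<integral>x. w x * h x \<partial>M)) \<le> (\<integral>\<^sup>+x. norm (w x * h x) \<partial>M)"
      by (rule integral_norm_bound_ennreal[OF True])
    also have "\<dots> = (\<integral>\<^sup>+x. ennreal (sqrt (w x)) * ennreal (sqrt (w x) * \<bar>h x\<bar>) \<partial>M)"
      using w_nonneg
      by (intro nn_integral_cong) (simp add: ennreal_mult[symmetric] abs_mult mult.assoc[symmetric])
    finally show ?thesis .
  qed (simp add: not_integrable_integral_eq)
  have "ennreal ((\<integral>x. w x * h x \<partial>M)\<^sup>2) = (ennreal (norm (\<integral>x. w x * h x \<partial>M)))\<^sup>2"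
    by (simp add: ennreal_power)
  also have "\<dots> \<le> (\<integral>\<^sup>+x. ennreal (sqrt (w x)) * ennreal (sqrt (w x) * \<bar>h x\<bar>) \<partial>M)\<^sup>2"
    by (rule power_mono[OF norm_le]) simp
  also have "\<dots> \<le> (\<integral>\<^sup>+x. (ennreal (sqrt (w x)))\<^sup>2 \<partial>M) * (\<integral>\<^sup>+x. (ennreal (sqrt (w x) * \<bar>h x\<bar>))\<^sup>2 \<partial>M)"
    by (rule Cauchy_Schwarz_nn_integral) measurable
  also have "\<dots> = ennreal (\<integral>x. w x \<partial>M) * (\<integral>\<^sup>+x. ennreal (w x * (h x)\<^sup>2) \<partial>M)"
    using w_nonneg
    by (simp add: ennreal_power power_mult_distrib nn_integral_eq_integral[OF w_int, symmetric])
  finally show ?thesis .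
qed

section \<open>The unit cell of the lattice \<open>\<int>\<^sup>n\<close>\<close>

definition unit_cell :: "(real^'n) set" where
  "unit_cell = {x. \<forall>i. 0 \<le> x$i \<and> x$i < 1}"

definition lattice_point :: "('n \<Rightarrow> int) \<Rightarrow> real^'n" where
  "lattice_point k = (\<chi> i. of_int (k i))"

definition cell_index :: "real^'n \<Rightarrow> ('n \<Rightarrow> int)" where
  "cell_index y = (\<lambda>i. \<lfloor>y$i\<rfloor>)"

lemma unit_cell_sets [measurable]: "(unit_cell :: (real^'n) set) \<in> sets borel"
proof -
  have "{x::real^'n. 0 \<le> x$i} \<inter> {x. x$i < 1} \<in> sets borel" for i
    by (intro sets.Int borel_closed borel_open closed_Collect_le open_Collect_less continuous_intros)
  then have "(\<Inter>i\<in>UNIV. {x::real^'n. 0 \<le> x$i} \<inter> {x. x$i < 1}) \<in> sets borel"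
    by (intro sets.finite_INT) auto
  also have "(\<Inter>i\<in>UNIV. {x::real^'n. 0 \<le> x$i} \<inter> {x. x$i < 1}) = unit_cell"
    unfolding unit_cell_def by auto
  finally show ?thesis .
qed

lemma diff_lattice_point_in_unit_cell_iff: "y - lattice_point k \<in> unit_cell \<longleftrightarrow> k = cell_index y"
proof
  assume a: "y - lattice_point k \<in> unit_cell"
  show "k = cell_index y"
  proof
    fix i
    from a have "0 \<le> y$i - of_int (k i)" "y$i - of_int (k i) < 1"
      unfolding unit_cell_def lattice_point_def by auto
    then show "k i = cell_index y i" unfolding cell_index_def by linarith
  qed
next
  assume "k = cell_index y"
  then show "y - lattice_point k \<in> unit_cell"
    unfolding unit_cell_def lattice_point_def cell_index_def by (simp add: of_int_floor_le) linarith
qed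

lemma lattice_point_uminus: "lattice_point (\<lambda>i. - k i) = - lattice_point k"
  unfolding lattice_point_def by (auto simp: vec_eq_iff)

lemma torus_fun_lattice_point: "torus_fun h \<Longrightarrow> h (x + lattice_point k) = h x"
  unfolding torus_fun_def int_vec_def lattice_point_def by auto

interpretation lattice_lborel: pair_sigma_finite "count_space (UNIV::('n::finite \<Rightarrow> int) set)" lborel
  by (intro pair_sigma_finite.intro sigma_finite_measure_count_space sigma_finite_lborel)

lemma measurable_lattice_lborel:
  assumes "\<And>k. f k \<in> borel_measurable borel"
  shows "case_prod f \<in> borel_measurable (count_space (UNIV::('n::finite \<Rightarrow> int) set) \<Otimes>\<^sub>M lborel)"
  by (rule measurable_pair_measure_countable1) (auto simp: assms measurable_lborel1)

lemma measurable_lborel_lattice: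
  fixes F :: "'k::countable \<Rightarrow> 'a \<Rightarrow> ennreal"
  assumes "\<And>k. F k \<in> borel_measurable N"
  shows "(\<lambda>(x,k). F k x) \<in> borel_measurable (N \<Otimes>\<^sub>M count_space UNIV)"
proof -
  have "(\<lambda>z. (\<lambda>k z. F k (fst z)) (snd z) z) \<in> borel_measurable (N \<Otimes>\<^sub>M count_space UNIV)"
    by (rule measurable_compose_countable) (auto intro: measurable_compose[OF measurable_fst assms])
  then show ?thesis by (simp add: case_prod_beta')
qed

lemma nn_integral_lborel_lattice_sum:
  fixes u :: "real^'n \<Rightarrow> ennreal"
  assumes [measurable]: "u \<in> borel_measurable borel"
  shows "(\<integral>\<^sup>+y. u y \<partial>lborel) =
    (\<integral>\<^sup>+x. indicator unit_cell x * (\<integral>\<^sup>+k. u (x + lattice_point k) \<partial>count_space UNIV) \<partial>lborel)"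
proof -
  have "indicator unit_cell ((y::real^'n) - lattice_point k) = (indicator {cell_index y} k :: ennreal)" for y k
    by (simp add: indicator_def diff_lattice_point_in_unit_cell_iff)
  then have "(\<integral>\<^sup>+y. u y \<partial>lborel)
      = (\<integral>\<^sup>+y. (\<integral>\<^sup>+k. u y * indicator unit_cell (y - lattice_point k) \<partial>count_space UNIV) \<partial>lborel)"
    by (simp add: nn_integral_cmult_indicator)
  also have "\<dots> = (\<integral>\<^sup>+k. (\<integral>\<^sup>+y. u y * indicator unit_cell (y - lattice_point k) \<partial>lborel) \<partial>count_space UNIV)"
    by (rule lattice_lborel.Fubini'[OF measurable_lattice_lborel]) simp
  also have "\<dots> = (\<integral>\<^sup>+k. (\<integral>\<^sup>+x. u (x + lattice_point k) * indicator unit_cell x \<partial>lborel) \<partial>count_space UNIV)"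
  proof (rule nn_integral_cong)
    fix k
    show "(\<integral>\<^sup>+y. u y * indicator unit_cell (y - lattice_point k) \<partial>lborel)
        = (\<integral>\<^sup>+x. u (x + lattice_point k) * indicator unit_cell x \<partial>lborel)"
      by (subst nn_integral_lborel_translate[of _ "lattice_point k"]) (simp_all add: add.commute)
  qed
  also have "\<dots> = (\<integral>\<^sup>+x. (\<integral>\<^sup>+k. u (x + lattice_point k) * indicator unit_cell x \<partial>count_space UNIV) \<partial>lborel)"
    by (rule lattice_lborel.Fubini'[OF measurable_lattice_lborel, symmetric]) simp
  also have "\<dots> = (\<integral>\<^sup>+x. indicator unit_cell x * (\<integral>\<^sup>+k. u (x + lattice_point k) \<partial>count_space UNIV) \<partial>lborel)"
    by (intro nn_integral_cong) (simp add: nn_integral_cmult[symmetric] mult.commute)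
  finally show ?thesis .
qed

lemma nn_integral_unit_cell_swap:
  fixes \<Phi> :: "real^'n \<Rightarrow> real^'n \<Rightarrow> ennreal"
  assumes meas[measurable]: "case_prod \<Phi> \<in> borel_measurable borel"
    and diag: "\<And>x y k. \<Phi> (x + lattice_point k) (y + lattice_point k) = \<Phi> x y"
  shows "(\<integral>\<^sup>+x. indicator unit_cell x * (\<integral>\<^sup>+y. \<Phi> x y \<partial>lborel) \<partial>lborel)
       = (\<integral>\<^sup>+y. indicator unit_cell y * (\<integral>\<^sup>+x. \<Phi> x y \<partial>lborel) \<partial>lborel)"
proof -
  \<comment> \<open>Both sides equal the integral over \<open>unit_cell \<times> unit_cell\<close> of the periodisation \<open>G\<close>.\<close>
  define G where "G x y = (\<integral>\<^sup>+k. \<Phi> (x - lattice_point k) y \<partial>count_space UNIV)" for x y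
  have mk: "(\<lambda>z::(real^'n)\<times>(real^'n). \<Phi> (fst z - lattice_point k) (snd z)) \<in> borel_measurable borel"
    for k :: "'n\<Rightarrow>int"
  proof -
    have "(\<lambda>z::(real^'n)\<times>(real^'n). (fst z - lattice_point k, snd z)) \<in> borel_measurable borel"
      by (intro borel_measurable_continuous_onI continuous_intros)
    from measurable_compose[OF this meas] show ?thesis by (simp add: case_prod_beta')
  qed
  have mG: "(\<lambda>z. G (fst z) (snd z)) \<in> borel_measurable borel"
    unfolding G_def
    by (rule lattice_lborel.M1.borel_measurable_nn_integral[where f="\<lambda>z k. \<Phi> (fst z - lattice_point k) (snd z)"])
       (rule measurable_lborel_lattice[where F="\<lambda>k z. \<Phi> (fst z - lattice_point k) (snd z)", OF mk])
  have [measurable]: "\<Phi> x \<in> borel_measurable borel" "(\<lambda>x. \<Phi> x y) \<in> borel_measurable borel" for x y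
    using borel_measurable_curry1[OF meas] borel_measurable_curry2[OF meas] by auto
  have mG2: "case_prod G \<in> borel_measurable borel"
    using mG by (simp add: case_prod_beta')
  have mGx: "(\<lambda>y. indicator unit_cell y * G x y) \<in> borel_measurable lborel" for x
    using borel_measurable_curry1[OF mG2] by (simp add: measurable_lborel1)
  have mGy: "(\<lambda>x. indicator unit_cell x * G x y) \<in> borel_measurable lborel" for y
    using borel_measurable_curry2[OF mG2] by (simp add: measurable_lborel1)
  have h1: "(\<integral>\<^sup>+y. \<Phi> x y \<partial>lborel) = (\<integral>\<^sup>+y. indicator unit_cell y * G x y \<partial>lborel)" for x
  proof -
    have "(\<integral>\<^sup>+y. \<Phi> x y \<partial>lborel) = (\<integral>\<^sup>+y. indicator unit_cell y * (\<integral>\<^sup>+k. \<Phi> x (y + lattice_point k) \<partial>count_space UNIV) \<partial>lborel)"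
      by (rule nn_integral_lborel_lattice_sum) measurable
    also have "\<dots> = (\<integral>\<^sup>+y. indicator unit_cell y * G x y \<partial>lborel)"
    proof -
      have d: "\<Phi> x (y + lattice_point k) = \<Phi> (x - lattice_point k) y" for y k
        using diag[where x="x - lattice_point k" and y=y and k=k] by simp
      show ?thesis unfolding G_def d ..
    qed
    finally show ?thesis .
  qed
  have h2: "(\<integral>\<^sup>+x. \<Phi> x y \<partial>lborel) = (\<integral>\<^sup>+x. indicator unit_cell x * G x y \<partial>lborel)" for y
  proof -
    have "(\<integral>\<^sup>+x. \<Phi> x y \<partial>lborel) = (\<integral>\<^sup>+x. indicator unit_cell x * (\<integral>\<^sup>+k. \<Phi> (x + lattice_point k) y \<partial>count_space UNIV) \<partial>lborel)"
      by (rule nn_integral_lborel_lattice_sum) measurable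
    also have "\<dots> = (\<integral>\<^sup>+x. indicator unit_cell x * G x y \<partial>lborel)"
    proof (rule nn_integral_cong)
      fix x
      have "(\<integral>\<^sup>+k. \<Phi> (x + lattice_point k) y \<partial>count_space UNIV) = (\<integral>\<^sup>+k. \<Phi> (x + lattice_point (\<lambda>i. - k i)) y \<partial>count_space UNIV)"
        by (rule nn_integral_bij_count_space[of "\<lambda>k i. - k i", OF bij_betwI[where g="\<lambda>k i. - k i"], symmetric]) auto
      also have "\<dots> = G x y" unfolding G_def lattice_point_uminus by simp
      finally show "indicator unit_cell x * (\<integral>\<^sup>+k. \<Phi> (x + lattice_point k) y \<partial>count_space UNIV) = indicator unit_cell x * G x y"
        by simp
    qed
    finally show ?thesis .
  qed
  have "(\<integral>\<^sup>+x. indicator unit_cell x * (\<integral>\<^sup>+y. \<Phi> x y \<partial>lborel) \<partial>lborel)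
      = (\<integral>\<^sup>+x. (\<integral>\<^sup>+y. indicator unit_cell x * (indicator unit_cell y * G x y) \<partial>lborel) \<partial>lborel)"
    by (simp add: h1 nn_integral_cmult[OF mGx])
  also have "\<dots> = (\<integral>\<^sup>+y. (\<integral>\<^sup>+x. indicator unit_cell x * (indicator unit_cell y * G x y) \<partial>lborel) \<partial>lborel)"
  proof (rule lborel_pair.Fubini'[symmetric])
    have e: "(\<lambda>(x, y). indicator unit_cell x * (indicator unit_cell y * G x y)) =
       (\<lambda>z. indicator (unit_cell \<times> UNIV) z * (indicator (UNIV \<times> unit_cell) z * G (fst z) (snd z)))"
      by (auto simp: indicator_def)
    have [measurable]: "unit_cell \<times> UNIV \<in> sets borel" "UNIV \<times> unit_cell \<in> sets borel"
      by (auto intro!: borel_Times)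
    show "(\<lambda>(x, y). indicator unit_cell x * (indicator unit_cell y * G x y)) \<in> borel_measurable (lborel \<Otimes>\<^sub>M lborel)"
      unfolding lborel_prod measurable_lborel1 e using mG by measurable
  qed
  also have "\<dots> = (\<integral>\<^sup>+y. indicator unit_cell y * (\<integral>\<^sup>+x. \<Phi> x y \<partial>lborel) \<partial>lborel)"
    by (simp add: h2 nn_integral_cmult[OF mGy, symmetric] mult.left_commute)
  finally show ?thesis .
qed

lemma nn_integral_pair_unit_cell_swap:
  fixes \<Theta> :: "real^'n \<Rightarrow> real^'n \<Rightarrow> ennreal"
  assumes meas: "case_prod \<Theta> \<in> borel_measurable borel"
    and diag: "\<And>x y k. \<Theta> (x + lattice_point k) (y + lattice_point k) = \<Theta> x y"
  shows "(\<integral>\<^sup>+z. indicator unit_cell (fst z) * \<Theta> (fst z) (snd z) \<partial>(lborel \<Otimes>\<^sub>M lborel))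
       = (\<integral>\<^sup>+z. indicator unit_cell (snd z) * \<Theta> (fst z) (snd z) \<partial>(lborel \<Otimes>\<^sub>M lborel))"
proof -
  have [measurable]: "unit_cell \<times> UNIV \<in> sets borel" "UNIV \<times> unit_cell \<in> sets borel"
    by (auto intro!: borel_Times)
  have e1: "(\<lambda>z. indicator unit_cell (fst z) * \<Theta> (fst z) (snd z)) = (\<lambda>z. indicator (unit_cell \<times> UNIV) z * case_prod \<Theta> z)"
    by (auto simp: indicator_def fun_eq_iff)
  have e2: "(\<lambda>z. indicator unit_cell (snd z) * \<Theta> (fst z) (snd z)) = (\<lambda>z. indicator (UNIV \<times> unit_cell) z * case_prod \<Theta> z)"
    by (auto simp: indicator_def fun_eq_iff)
  have m1: "(\<lambda>z. indicator unit_cell (fst z) * \<Theta> (fst z) (snd z)) \<in> borel_measurable (lborel \<Otimes>\<^sub>M lborel)"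
    unfolding borel_measurable_lborel_pair_iff e1 using meas by measurable
  have m2: "(\<lambda>z. indicator unit_cell (snd z) * \<Theta> (fst z) (snd z)) \<in> borel_measurable (lborel \<Otimes>\<^sub>M lborel)"
    unfolding borel_measurable_lborel_pair_iff e2 using meas by measurable
  have mx: "\<Theta> x \<in> borel_measurable lborel" for x using borel_measurable_curry1[OF meas] by simp
  have my: "(\<lambda>x. \<Theta> x y) \<in> borel_measurable lborel" for y using borel_measurable_curry2[OF meas] by simp
  have "(\<integral>\<^sup>+z. indicator unit_cell (fst z) * \<Theta> (fst z) (snd z) \<partial>(lborel \<Otimes>\<^sub>M lborel))
      = (\<integral>\<^sup>+x. \<integral>\<^sup>+y. indicator unit_cell x * \<Theta> x y \<partial>lborel \<partial>lborel)"
    using lborel.nn_integral_fst[OF m1] by simp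
  also have "\<dots> = (\<integral>\<^sup>+x. indicator unit_cell x * (\<integral>\<^sup>+y. \<Theta> x y \<partial>lborel) \<partial>lborel)"
    by (simp add: nn_integral_cmult[OF mx])
  also have "\<dots> = (\<integral>\<^sup>+y. indicator unit_cell y * (\<integral>\<^sup>+x. \<Theta> x y \<partial>lborel) \<partial>lborel)"
    by (rule nn_integral_unit_cell_swap[OF meas diag])
  also have "\<dots> = (\<integral>\<^sup>+y. \<integral>\<^sup>+x. indicator unit_cell y * \<Theta> x y \<partial>lborel \<partial>lborel)"
    by (simp add: nn_integral_cmult[OF my])
  also have "\<dots> = (\<integral>\<^sup>+z. indicator unit_cell (snd z) * \<Theta> (fst z) (snd z) \<partial>(lborel \<Otimes>\<^sub>M lborel))"
    using lborel_pair.nn_integral_snd[OF m2] by simp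
  finally show ?thesis .
qed

lemma integral_pair_unit_cell_swap:
  fixes \<Phi> :: "real^'n \<Rightarrow> real^'n \<Rightarrow> real"
  defines "M \<equiv> lborel \<Otimes>\<^sub>M lborel :: ((real^'n) \<times> (real^'n)) measure"
  assumes meas: "case_prod \<Phi> \<in> borel_measurable borel"
    and diag: "\<And>x y k. \<Phi> (x + lattice_point k) (y + lattice_point k) = \<Phi> x y"
    and int1: "integrable M (\<lambda>z. indicator unit_cell (fst z) * \<Phi> (fst z) (snd z))"
  shows "integrable M (\<lambda>z. indicator unit_cell (snd z) * \<Phi> (fst z) (snd z))"
    and "(\<integral>z. indicator unit_cell (fst z) * \<Phi> (fst z) (snd z) \<partial>M)
       = (\<integral>z. indicator unit_cell (snd z) * \<Phi> (fst z) (snd z) \<partial>M)"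
proof -
  have swap: "(\<integral>\<^sup>+z. indicator unit_cell (fst z) * T (\<Phi> (fst z) (snd z)) \<partial>M)
       = (\<integral>\<^sup>+z. indicator unit_cell (snd z) * T (\<Phi> (fst z) (snd z)) \<partial>M)"
    if "continuous_on UNIV T" for T :: "real \<Rightarrow> ennreal"
  proof -
    have "T \<in> borel_measurable borel" using that by (rule borel_measurable_continuous_onI)
    from measurable_compose[OF meas this]
    have "case_prod (\<lambda>x y. T (\<Phi> x y)) \<in> borel_measurable borel" by (simp add: case_prod_beta' o_def)
    then show ?thesis unfolding M_def by (rule nn_integral_pair_unit_cell_swap) (simp add: diag)
  qed
  have [measurable]: "unit_cell \<times> UNIV \<in> sets borel" "UNIV \<times> unit_cell \<in> sets borel"
    by (auto intro!: borel_Times)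
  have eq2: "(\<lambda>z. indicator unit_cell (snd z) * \<Phi> (fst z) (snd z)) = (\<lambda>z. indicator (UNIV \<times> unit_cell) z * case_prod \<Phi> z)"
    by (auto simp: indicator_def fun_eq_iff)
  have meas2: "(\<lambda>z. indicator unit_cell (snd z) * \<Phi> (fst z) (snd z)) \<in> borel_measurable M"
    unfolding M_def borel_measurable_lborel_pair_iff eq2 using meas by measurable
  have ind_norm: "ennreal (norm (indicator A a * r)) = indicator A a * ennreal \<bar>r\<bar>" for A a and r :: real
    by (auto simp: indicator_def)
  have ind_neg: "ennreal (- (indicator A a * r)) = indicator A a * ennreal (- r)" for A a and r :: real
    by (auto simp: indicator_def)
  have "(\<integral>\<^sup>+z. norm (indicator unit_cell (snd z) * \<Phi> (fst z) (snd z)) \<partial>M)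
      = (\<integral>\<^sup>+z. norm (indicator unit_cell (fst z) * \<Phi> (fst z) (snd z)) \<partial>M)"
    unfolding ind_norm by (rule swap[symmetric]) (intro continuous_on_ennreal continuous_intros)
  with int1 show int2: "integrable M (\<lambda>z. indicator unit_cell (snd z) * \<Phi> (fst z) (snd z))"
    using meas2 by (simp add: integrable_iff_bounded)
  have pos: "(\<integral>\<^sup>+z. indicator unit_cell (fst z) * \<Phi> (fst z) (snd z) \<partial>M)
      = (\<integral>\<^sup>+z. indicator unit_cell (snd z) * \<Phi> (fst z) (snd z) \<partial>M)"
    unfolding indicator_mult_ennreal[symmetric] by (rule swap) (intro continuous_on_ennreal continuous_intros)
  have neg: "(\<integral>\<^sup>+z. - (indicator unit_cell (fst z) * \<Phi> (fst z) (snd z)) \<partial>M)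
      = (\<integral>\<^sup>+z. - (indicator unit_cell (snd z) * \<Phi> (fst z) (snd z)) \<partial>M)"
    unfolding ind_neg by (rule swap) (intro continuous_on_ennreal continuous_intros)
  show "(\<integral>z. indicator unit_cell (fst z) * \<Phi> (fst z) (snd z) \<partial>M)
      = (\<integral>z. indicator unit_cell (snd z) * \<Phi> (fst z) (snd z) \<partial>M)"
    unfolding real_lebesgue_integral_def[OF int1] real_lebesgue_integral_def[OF int2] pos neg ..
qed

lemma integral_unit_cell_swap:
  fixes \<Phi> :: "real^'n \<Rightarrow> real^'n \<Rightarrow> real"
  assumes meas: "case_prod \<Phi> \<in> borel_measurable borel"
    and diag: "\<And>x y k. \<Phi> (x + lattice_point k) (y + lattice_point k) = \<Phi> x y"
    and fin: "(\<integral>\<^sup>+x. indicator unit_cell x * (\<integral>\<^sup>+y. ennreal \<bar>\<Phi> x y\<bar> \<partial>lborel) \<partial>lborel) < \<infinity>"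
  shows "(\<integral>x. indicator unit_cell x * (\<integral>y. \<Phi> x y \<partial>lborel) \<partial>lborel)
       = (\<integral>y. indicator unit_cell y * (\<integral>x. \<Phi> x y \<partial>lborel) \<partial>lborel)"
proof -
  let ?M = "lborel \<Otimes>\<^sub>M lborel :: ((real^'n) \<times> (real^'n)) measure"
  define P1 where "P1 = (\<lambda>z. indicator unit_cell (fst z) * \<Phi> (fst z) (snd z))"
  define P2 where "P2 = (\<lambda>z. indicator unit_cell (snd z) * \<Phi> (fst z) (snd z))"
  have [measurable]: "unit_cell \<times> UNIV \<in> sets borel"
    by (auto intro!: borel_Times)
  have eq1: "P1 = (\<lambda>z. indicator (unit_cell \<times> UNIV) z * case_prod \<Phi> z)"
    by (auto simp: P1_def indicator_def fun_eq_iff)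
  have m1: "P1 \<in> borel_measurable ?M"
    unfolding borel_measurable_lborel_pair_iff eq1 using meas by measurable
  have mx: "(\<lambda>y. ennreal \<bar>\<Phi> x y\<bar>) \<in> borel_measurable lborel" for x
    using borel_measurable_curry1[OF meas] by (simp add: measurable_lborel1)
  have "(\<integral>\<^sup>+z. ennreal (norm (P1 z)) \<partial>?M) = (\<integral>\<^sup>+x. \<integral>\<^sup>+y. ennreal (norm (P1 (x,y))) \<partial>lborel \<partial>lborel)"
    by (rule lborel.nn_integral_fst[symmetric]) (use m1 in measurable)
  also have "\<dots> = (\<integral>\<^sup>+x. indicator unit_cell x * (\<integral>\<^sup>+y. ennreal \<bar>\<Phi> x y\<bar> \<partial>lborel) \<partial>lborel)"
    by (simp add: P1_def abs_mult indicator_mult_ennreal[symmetric] nn_integral_cmult[OF mx])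
  finally have i1: "integrable ?M P1" using m1 fin by (simp add: integrable_iff_bounded)
  have i2: "integrable ?M P2" and swap: "integral\<^sup>L ?M P1 = integral\<^sup>L ?M P2"
    using integral_pair_unit_cell_swap[OF meas diag i1[unfolded P1_def]] unfolding P1_def P2_def by simp_all
  have "(\<integral>x. indicator unit_cell x * (\<integral>y. \<Phi> x y \<partial>lborel) \<partial>lborel) = integral\<^sup>L ?M P1"
    using lborel_pair.integral_fst'[OF i1] by (simp add: P1_def)
  also have "\<dots> = (\<integral>y. indicator unit_cell y * (\<integral>x. \<Phi> x y \<partial>lborel) \<partial>lborel)"
    using swap lborel_pair.integral_snd[of "\<lambda>x y. P2 (x,y)"] i2 by (simp add: P2_def case_prod_beta')
  finally show ?thesis .
qed
lemma One_nth [simp]: "(One::real^'n) $ i = 1"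
  by (simp add: Cart_1[symmetric])

lemma unit_cell_subset_cbox: "unit_cell \<subseteq> cbox 0 (One::real^'n)"
  unfolding unit_cell_def by (auto simp only: mem_box_cart One_nth) (auto simp: less_imp_le)

lemma AE_indicator_cbox_eq_unit_cell:
  "AE x in lborel. indicator (cbox 0 (One::real^'n)) x = (indicator unit_cell x :: real)"
proof (rule AE_I'[OF null_sets_cbox_Diff_box])
  have "box 0 One \<subseteq> (unit_cell :: (real^'n) set)"
    unfolding unit_cell_def by (auto simp only: mem_box_cart One_nth) (auto simp: less_imp_le)
  then show "{x \<in> space lborel. indicator (cbox 0 (One::real^'n)) x \<noteq> (indicator unit_cell x :: real)}
      \<subseteq> cbox 0 One - box 0 One"
    using unit_cell_subset_cbox by (auto simp: indicator_def)
qed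

lemma torus_integral_eq_cell_integral:
  fixes h :: "real^'n \<Rightarrow> real"
  assumes "h \<in> borel_measurable borel"
  shows "torus_integral h = (\<integral>x. indicator unit_cell x * h x \<partial>lborel)"
  unfolding torus_integral_def set_lebesgue_integral_def
  by (rule integral_cong_AE) (use assms AE_indicator_cbox_eq_unit_cell in auto)

section \<open>Positive periodic kernels with a stationary density\<close>

locale torus_kernel =
  fixes \<theta> :: "real^'n \<Rightarrow> real" and \<gamma> Q :: "real^'n \<Rightarrow> real^'n \<Rightarrow> real"
  assumes theta_cont: "continuous_on UNIV \<theta>" and theta_pos: "\<And>x. \<theta> x > 0"
   and theta_torus: "torus_fun \<theta>"
   and gamma_cont: "continuous_on UNIV (\<lambda>z. \<gamma> (fst z) (snd z))"
   and gamma_pos: "\<And>x v. \<gamma> x v > 0"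
   and gamma_torus: "\<And>v. torus_fun (\<lambda>x. \<gamma> x v)"
   and Q_eq: "\<And>x v. Q x v = \<theta> (x - v) * \<gamma> (x - v) v / \<theta> x"
   and gamma_one: "\<And>x. (\<integral>v. \<gamma> x v \<partial>lborel) = 1"
   and Q_one: "\<And>x. (\<integral>v. Q x v \<partial>lborel) = 1"
   and theta_prob: "torus_integral \<theta> = 1"
begin

lemma theta_periodic: "\<theta> (x + lattice_point k) = \<theta> x"
  by (rule torus_fun_lattice_point[OF theta_torus])

lemma gamma_periodic: "\<gamma> (x + lattice_point k) v = \<gamma> x v"
  by (rule torus_fun_lattice_point[OF gamma_torus])

lemma theta_measurable[measurable]: "\<theta> \<in> borel_measurable borel"
  using theta_cont by (rule borel_measurable_continuous_onI)

lemma theta_nonzero: "\<theta> x \<noteq> 0" using theta_pos[of x] by simp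

lemma theta_mult_Q: "\<theta> x * Q x v = \<theta> (x - v) * \<gamma> (x - v) v"
  using theta_pos[of x] by (simp add: Q_eq)

lemma gamma_measurable: "(\<lambda>z. \<gamma> (fst z) (snd z)) \<in> borel_measurable borel"
  using gamma_cont by (rule borel_measurable_continuous_onI)

lemma continuous_on_gamma_compose:
  assumes "continuous_on UNIV a" "continuous_on UNIV b"
  shows "continuous_on UNIV (\<lambda>z. \<gamma> (a z) (b z))"
proof -
  have "continuous_on UNIV ((\<lambda>z. \<gamma> (fst z) (snd z)) \<circ> (\<lambda>z. (a z, b z)))"
    by (rule continuous_on_compose) (auto intro!: continuous_intros assms continuous_on_subset[OF gamma_cont])
  then show ?thesis by (simp add: o_def)
qed

lemma Q_cont: "continuous_on UNIV (\<lambda>z. Q (fst z) (snd z))"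
proof -
  have "continuous_on UNIV (\<lambda>z. \<theta> (fst z - snd z) * \<gamma> (fst z - snd z) (snd z) / \<theta> (fst z))"
    by (intro continuous_intros continuous_on_gamma_compose continuous_on_compose2[OF theta_cont]) (auto simp: theta_nonzero)
  then show ?thesis by (simp add: Q_eq)
qed

lemma Q_pos: "Q x v > 0"
  using theta_pos gamma_pos by (simp add: Q_eq)

lemma Q_periodic: "Q (x + lattice_point k) v = Q x v"
proof -
  have e: "x + lattice_point k - v = (x - v) + lattice_point k" by (simp add: algebra_simps)
  show ?thesis by (simp only: Q_eq e theta_periodic gamma_periodic)
qed

lemma gamma_integrable: "integrable lborel (\<gamma> x)"
  using gamma_one[of x] not_integrable_integral_eq by fastforce

lemma Q_integrable: "integrable lborel (Q x)"
  using Q_one[of x] not_integrable_integral_eq by fastforce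

lemma nn_integral_gamma: "(\<integral>\<^sup>+v. ennreal (\<gamma> x v) \<partial>lborel) = 1"
  using nn_integral_eq_integral[OF gamma_integrable] gamma_pos gamma_one by (simp add: less_imp_le)

lemma nn_integral_Q: "(\<integral>\<^sup>+v. ennreal (Q x v) \<partial>lborel) = 1"
  using nn_integral_eq_integral[OF Q_integrable] Q_pos Q_one by (simp add: less_imp_le)


lemma gamma_slice_measurable[measurable]: "\<gamma> x \<in> borel_measurable borel"
  using borel_measurable_curry1[of \<gamma> x] gamma_measurable by (simp add: case_prod_beta')

lemma Q_slice_measurable[measurable]: "Q x \<in> borel_measurable borel"
  using borel_measurable_curry1[of Q x] borel_measurable_continuous_onI[OF Q_cont]
  by (simp add: case_prod_beta')

lemma theta_measurable_lborel[measurable]: "\<theta> \<in> borel_measurable lborel"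
  by (simp add: measurable_lborel1)

lemma gamma_diff_measurable[measurable]: "(\<lambda>z. \<gamma> (fst z) (snd z - fst z)) \<in> borel_measurable borel"
  by (rule borel_measurable_continuous_onI, rule continuous_on_gamma_compose) (intro continuous_intros)+

lemma gamma_diff_measurable_lborel[measurable]:
  "(\<lambda>z. \<gamma> (fst z) (snd z - fst z)) \<in> borel_measurable (lborel \<Otimes>\<^sub>M lborel)"
  unfolding borel_measurable_lborel_pair_iff by (rule gamma_diff_measurable)

lemma gamma_measurable_lborel[measurable]: "(\<lambda>z. \<gamma> (fst z) (snd z)) \<in> borel_measurable (lborel \<Otimes>\<^sub>M lborel)"
  unfolding borel_measurable_lborel_pair_iff by (rule gamma_measurable)

lemma Q_measurable_lborel[measurable]: "(\<lambda>z. Q (fst z) (snd z)) \<in> borel_measurable (lborel \<Otimes>\<^sub>M lborel)"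
  unfolding borel_measurable_lborel_pair_iff by (rule borel_measurable_continuous_onI[OF Q_cont])

lemma nn_integral_unit_cell_adjoint:
  fixes a b :: "real^'n \<Rightarrow> ennreal"
  assumes ma[measurable]: "a \<in> borel_measurable borel" and mb[measurable]: "b \<in> borel_measurable borel"
   and pa: "\<And>x k. a (x + lattice_point k) = a x" and pb: "\<And>x k. b (x + lattice_point k) = b x"
  shows "(\<integral>\<^sup>+x. indicator unit_cell x * (ennreal (\<theta> x) * a x * (\<integral>\<^sup>+v. ennreal (\<gamma> x v) * b (x + v) \<partial>lborel)) \<partial>lborel)
       = (\<integral>\<^sup>+y. indicator unit_cell y * (ennreal (\<theta> y) * b y * (\<integral>\<^sup>+w. ennreal (Q y w) * a (y - w) \<partial>lborel)) \<partial>lborel)"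
proof -
  define \<Theta> where "\<Theta> x y = ennreal (\<theta> x) * a x * ennreal (\<gamma> x (y - x)) * b y" for x y
  have [measurable]: "a \<in> borel_measurable lborel" "b \<in> borel_measurable lborel"
    by (simp_all add: measurable_lborel1)
  have m0: "(\<lambda>z. ennreal (\<theta> (fst z)) * a (fst z) * ennreal (\<gamma> (fst z) (snd z - fst z)) * b (snd z)) \<in> borel_measurable borel"
    unfolding borel_measurable_lborel_pair_iff[symmetric] by measurable
  have meas: "case_prod \<Theta> \<in> borel_measurable borel"
    using m0 by (simp add: \<Theta>_def case_prod_beta')
  have diag: "\<Theta> (x + lattice_point k) (y + lattice_point k) = \<Theta> x y" for x y k
    by (simp add: \<Theta>_def theta_periodic gamma_periodic pa pb)
  have i1: "(\<integral>\<^sup>+y. \<Theta> x y \<partial>lborel) = ennreal (\<theta> x) * a x * (\<integral>\<^sup>+v. ennreal (\<gamma> x v) * b (x + v) \<partial>lborel)" for x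
  proof -
    have "(\<integral>\<^sup>+y. \<Theta> x y \<partial>lborel) = (\<integral>\<^sup>+v. \<Theta> x (x + v) \<partial>lborel)"
      by (rule nn_integral_lborel_translate) (use borel_measurable_curry1[OF meas] in simp)
    also have "\<dots> = (\<integral>\<^sup>+v. (ennreal (\<theta> x) * a x) * (ennreal (\<gamma> x v) * b (x + v)) \<partial>lborel)"
      by (simp add: \<Theta>_def mult.assoc)
    also have "\<dots> = ennreal (\<theta> x) * a x * (\<integral>\<^sup>+v. ennreal (\<gamma> x v) * b (x + v) \<partial>lborel)"
      by (rule nn_integral_cmult) measurable
    finally show ?thesis .
  qed
  have i2: "(\<integral>\<^sup>+x. \<Theta> x y \<partial>lborel) = ennreal (\<theta> y) * b y * (\<integral>\<^sup>+w. ennreal (Q y w) * a (y - w) \<partial>lborel)" for y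
  proof -
    have "(\<integral>\<^sup>+x. \<Theta> x y \<partial>lborel) = (\<integral>\<^sup>+w. \<Theta> (y - w) y \<partial>lborel)"
      by (rule nn_integral_lborel_reflect) (use borel_measurable_curry2[OF meas] in simp)
    also have "\<dots> = (\<integral>\<^sup>+w. (ennreal (\<theta> y) * b y) * (ennreal (Q y w) * a (y - w)) \<partial>lborel)"
    proof (rule nn_integral_cong)
      fix w
      have "ennreal (\<theta> (y - w)) * ennreal (\<gamma> (y - w) w) = ennreal (\<theta> y) * ennreal (Q y w)"
        using theta_mult_Q[of y w] theta_pos gamma_pos Q_pos
        by (simp add: ennreal_mult[symmetric] less_imp_le)
      then show "\<Theta> (y - w) y = (ennreal (\<theta> y) * b y) * (ennreal (Q y w) * a (y - w))"
        unfolding \<Theta>_def by (simp add: mult_ac)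
    qed
    also have "\<dots> = ennreal (\<theta> y) * b y * (\<integral>\<^sup>+w. ennreal (Q y w) * a (y - w) \<partial>lborel)"
      by (rule nn_integral_cmult) measurable
    finally show ?thesis .
  qed
  from nn_integral_unit_cell_swap[OF meas diag] show ?thesis by (simp add: i1 i2)
qed


definition sqnorm_nn :: "(real^'n \<Rightarrow> real) \<Rightarrow> ennreal" where
  "sqnorm_nn h = (\<integral>\<^sup>+x. indicator unit_cell x * ennreal (\<theta> x * (h x)\<^sup>2) \<partial>lborel)"

definition periodic_L2 :: "(real^'n \<Rightarrow> real) \<Rightarrow> bool" where
  "periodic_L2 h \<longleftrightarrow> h \<in> borel_measurable borel \<and> (\<forall>x k. h (x + lattice_point k) = h x) \<and> sqnorm_nn h < \<infinity>"

lemma opF_measurable: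
  assumes hm: "h \<in> borel_measurable borel"
  shows "opF \<gamma> h \<in> borel_measurable borel"
proof -
  have [measurable]: "h \<in> borel_measurable lborel" using hm by (simp add: measurable_lborel1)
  have "(\<lambda>z. \<gamma> (fst z) (snd z) * h (fst z + snd z)) \<in> borel_measurable (lborel \<Otimes>\<^sub>M lborel)"
    by measurable
  then have "case_prod (\<lambda>x v. \<gamma> x v * h (x + v)) \<in> borel_measurable (lborel \<Otimes>\<^sub>M lborel)"
    by (simp add: case_prod_beta')
  from lborel.borel_measurable_lebesgue_integral[OF this]
  show ?thesis unfolding opF_def[abs_def] by (simp add: measurable_lborel1)
qed

lemma opFstar_measurable:
  assumes hm: "h \<in> borel_measurable borel"
  shows "opFstar Q h \<in> borel_measurable borel"
proof -
  have [measurable]: "h \<in> borel_measurable lborel" using hm by (simp add: measurable_lborel1)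
  have "(\<lambda>z. Q (fst z) (snd z) * h (fst z - snd z)) \<in> borel_measurable (lborel \<Otimes>\<^sub>M lborel)"
    by measurable
  then have "case_prod (\<lambda>x v. Q x v * h (x - v)) \<in> borel_measurable (lborel \<Otimes>\<^sub>M lborel)"
    by (simp add: case_prod_beta')
  from lborel.borel_measurable_lebesgue_integral[OF this]
  show ?thesis unfolding opFstar_def[abs_def] by (simp add: measurable_lborel1)
qed

lemma opF_periodic:
  assumes "\<And>x k. h (x + lattice_point k) = h x"
  shows "opF \<gamma> h (x + lattice_point k) = opF \<gamma> h x"
proof -
  have "h (x + lattice_point k + v) = h (x + v)" for v
    using assms[of "x + v" k] by (simp add: algebra_simps)
  then show ?thesis unfolding opF_def by (simp add: gamma_periodic)
qed

lemma opFstar_periodic: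
  assumes "\<And>x k. h (x + lattice_point k) = h x"
  shows "opFstar Q h (x + lattice_point k) = opFstar Q h x"
proof -
  have "h (x + lattice_point k - v) = h (x - v)" for v
    using assms[of "x - v" k] by (simp add: algebra_simps)
  then show ?thesis unfolding opFstar_def by (simp add: Q_periodic)
qed

lemma opF_square_le:
  assumes "h \<in> borel_measurable borel"
  shows "ennreal ((opF \<gamma> h x)\<^sup>2) \<le> (\<integral>\<^sup>+v. ennreal (\<gamma> x v) * ennreal ((h (x + v))\<^sup>2) \<partial>lborel)"
proof -
  have [measurable]: "h \<in> borel_measurable lborel" using assms by (simp add: measurable_lborel1)
  have "ennreal ((opF \<gamma> h x)\<^sup>2) \<le> ennreal (\<integral>v. \<gamma> x v \<partial>lborel) * (\<integral>\<^sup>+v. ennreal (\<gamma> x v * (h (x + v))\<^sup>2) \<partial>lborel)"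
    unfolding opF_def by (rule weighted_integral_square_le) (use gamma_pos gamma_integrable in \<open>auto intro: less_imp_le\<close>)
  also have "\<dots> = (\<integral>\<^sup>+v. ennreal (\<gamma> x v) * ennreal ((h (x + v))\<^sup>2) \<partial>lborel)"
    using gamma_pos by (simp add: gamma_one ennreal_mult less_imp_le)
  finally show ?thesis .
qed

lemma opFstar_square_le:
  assumes "h \<in> borel_measurable borel"
  shows "ennreal ((opFstar Q h x)\<^sup>2) \<le> (\<integral>\<^sup>+w. ennreal (Q x w) * ennreal ((h (x - w))\<^sup>2) \<partial>lborel)"
proof -
  have [measurable]: "h \<in> borel_measurable lborel" using assms by (simp add: measurable_lborel1)
  have "ennreal ((opFstar Q h x)\<^sup>2) \<le> ennreal (\<integral>v. Q x v \<partial>lborel) * (\<integral>\<^sup>+v. ennreal (Q x v * (h (x - v))\<^sup>2) \<partial>lborel)"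
    unfolding opFstar_def by (rule weighted_integral_square_le) (use Q_pos Q_integrable in \<open>auto intro: less_imp_le\<close>)
  also have "\<dots> = (\<integral>\<^sup>+w. ennreal (Q x w) * ennreal ((h (x - w))\<^sup>2) \<partial>lborel)"
    using Q_pos by (simp add: Q_one ennreal_mult less_imp_le)
  finally show ?thesis .
qed

lemma sqnorm_nn_gamma_average:
  assumes "h \<in> borel_measurable borel" "\<And>x k. h (x + lattice_point k) = h x"
  shows "(\<integral>\<^sup>+x. indicator unit_cell x * (ennreal (\<theta> x) * (\<integral>\<^sup>+v. ennreal (\<gamma> x v) * ennreal ((h (x + v))\<^sup>2) \<partial>lborel)) \<partial>lborel) = sqnorm_nn h"
proof -
  have [measurable]: "h \<in> borel_measurable borel" by fact
  have "(\<integral>\<^sup>+x. indicator unit_cell x * (ennreal (\<theta> x) * 1 * (\<integral>\<^sup>+v. ennreal (\<gamma> x v) * ennreal ((h (x + v))\<^sup>2) \<partial>lborel)) \<partial>lborel)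
     = (\<integral>\<^sup>+y. indicator unit_cell y * (ennreal (\<theta> y) * ennreal ((h y)\<^sup>2) * (\<integral>\<^sup>+w. ennreal (Q y w) * 1 \<partial>lborel)) \<partial>lborel)"
    by (rule nn_integral_unit_cell_adjoint[where a="\<lambda>_. 1" and b="\<lambda>y. ennreal ((h y)\<^sup>2)"]) (auto simp: assms(2))
  then show ?thesis
    by (simp add: sqnorm_nn_def nn_integral_Q ennreal_mult[symmetric] theta_pos less_imp_le)
qed

lemma sqnorm_nn_Q_average:
  assumes "h \<in> borel_measurable borel" "\<And>x k. h (x + lattice_point k) = h x"
  shows "(\<integral>\<^sup>+x. indicator unit_cell x * (ennreal (\<theta> x) * (\<integral>\<^sup>+w. ennreal (Q x w) * ennreal ((h (x - w))\<^sup>2) \<partial>lborel)) \<partial>lborel) = sqnorm_nn h"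
proof -
  have [measurable]: "h \<in> borel_measurable borel" by fact
  have "(\<integral>\<^sup>+x. indicator unit_cell x * (ennreal (\<theta> x) * ennreal ((h x)\<^sup>2) * (\<integral>\<^sup>+v. ennreal (\<gamma> x v) * 1 \<partial>lborel)) \<partial>lborel)
     = (\<integral>\<^sup>+y. indicator unit_cell y * (ennreal (\<theta> y) * 1 * (\<integral>\<^sup>+w. ennreal (Q y w) * ennreal ((h (y - w))\<^sup>2) \<partial>lborel)) \<partial>lborel)"
    by (rule nn_integral_unit_cell_adjoint[where b="\<lambda>_. 1" and a="\<lambda>y. ennreal ((h y)\<^sup>2)"]) (auto simp: assms(2))
  then show ?thesis
    by (simp add: sqnorm_nn_def nn_integral_gamma ennreal_mult[symmetric] theta_pos less_imp_le)
qed

lemma sqnorm_nn_opF_le: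
  assumes "h \<in> borel_measurable borel" "\<And>x k. h (x + lattice_point k) = h x"
  shows "sqnorm_nn (opF \<gamma> h) \<le> sqnorm_nn h"
proof -
  have "sqnorm_nn (opF \<gamma> h) \<le> (\<integral>\<^sup>+x. indicator unit_cell x * (ennreal (\<theta> x) * (\<integral>\<^sup>+v. ennreal (\<gamma> x v) * ennreal ((h (x + v))\<^sup>2) \<partial>lborel)) \<partial>lborel)"
    unfolding sqnorm_nn_def
    by (intro nn_integral_mono mult_left_mono)
       (auto simp: ennreal_mult theta_pos less_imp_le intro!: mult_left_mono opF_square_le[OF assms(1)])
  then show ?thesis using sqnorm_nn_gamma_average[OF assms] by simp
qed

lemma sqnorm_nn_opFstar_le:
  assumes "h \<in> borel_measurable borel" "\<And>x k. h (x + lattice_point k) = h x"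
  shows "sqnorm_nn (opFstar Q h) \<le> sqnorm_nn h"
proof -
  have "sqnorm_nn (opFstar Q h) \<le> (\<integral>\<^sup>+x. indicator unit_cell x * (ennreal (\<theta> x) * (\<integral>\<^sup>+w. ennreal (Q x w) * ennreal ((h (x - w))\<^sup>2) \<partial>lborel)) \<partial>lborel)"
    unfolding sqnorm_nn_def
    by (intro nn_integral_mono mult_left_mono)
       (auto simp: ennreal_mult theta_pos less_imp_le intro!: mult_left_mono opFstar_square_le[OF assms(1)])
  then show ?thesis using sqnorm_nn_Q_average[OF assms] by simp
qed

lemma periodic_L2_opF: "periodic_L2 h \<Longrightarrow> periodic_L2 (opF \<gamma> h)"
  unfolding periodic_L2_def using opF_measurable opF_periodic sqnorm_nn_opF_le by (meson le_less_trans)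

lemma periodic_L2_opFstar: "periodic_L2 h \<Longrightarrow> periodic_L2 (opFstar Q h)"
  unfolding periodic_L2_def using opFstar_measurable opFstar_periodic sqnorm_nn_opFstar_le by (meson le_less_trans)


lemma gamma_average_measurable:
  assumes "h \<in> borel_measurable borel"
  shows "(\<lambda>x. \<integral>\<^sup>+v. ennreal (\<gamma> x v) * ennreal ((h (x + v))\<^sup>2) \<partial>lborel) \<in> borel_measurable lborel"
proof -
  have [measurable]: "h \<in> borel_measurable lborel" using assms by (simp add: measurable_lborel1)
  have "(\<lambda>z. ennreal (\<gamma> (fst z) (snd z)) * ennreal ((h (fst z + snd z))\<^sup>2)) \<in> borel_measurable (lborel \<Otimes>\<^sub>M lborel)"
    by measurable
  then have "case_prod (\<lambda>x v. ennreal (\<gamma> x v) * ennreal ((h (x + v))\<^sup>2)) \<in> borel_measurable (lborel \<Otimes>\<^sub>M lborel)"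
    by (simp add: case_prod_beta')
  from lborel.borel_measurable_nn_integral[OF this] show ?thesis .
qed

lemma nn_integral_unit_cell_abs_product_le:
  assumes f: "periodic_L2 f" and g: "periodic_L2 g"
  shows "(\<integral>\<^sup>+x. indicator unit_cell x * (\<integral>\<^sup>+y. ennreal \<bar>f x * \<theta> x * (\<gamma> x (y - x) * g y)\<bar> \<partial>lborel) \<partial>lborel)
      \<le> sqnorm_nn f + sqnorm_nn g"
proof -
  have [measurable]: "f \<in> borel_measurable borel" "g \<in> borel_measurable borel"
    and gp: "\<And>x k. g (x + lattice_point k) = g x" using f g by (auto simp: periodic_L2_def)
  have [measurable]: "f \<in> borel_measurable lborel" "g \<in> borel_measurable lborel"
    by (simp_all add: measurable_lborel1)
  define G where "G x = (\<integral>\<^sup>+v. ennreal (\<gamma> x v) * ennreal ((g (x + v))\<^sup>2) \<partial>lborel)" for x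
  have [measurable]: "G \<in> borel_measurable lborel"
    unfolding G_def[abs_def] by (rule gamma_average_measurable) measurable
  have [measurable]: "(\<lambda>y. \<gamma> x (y - x)) \<in> borel_measurable borel" for x
    by (intro borel_measurable_continuous_onI continuous_on_gamma_compose continuous_intros)
  have pw: "ennreal \<bar>f x * \<theta> x * (\<gamma> x v * g (x + v))\<bar>
      \<le> ennreal (\<theta> x * (f x)\<^sup>2) * ennreal (\<gamma> x v) + ennreal (\<theta> x) * (ennreal (\<gamma> x v) * ennreal ((g (x + v))\<^sup>2))"
    for x v
  proof -
    have p: "0 < \<theta> x" "0 < \<gamma> x v" using theta_pos gamma_pos by auto
    have "\<bar>f x * \<theta> x * (\<gamma> x v * g (x + v))\<bar> = \<theta> x * \<gamma> x v * \<bar>f x * g (x + v)\<bar>"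
      using p by (simp add: abs_mult mult_ac)
    also have "\<dots> \<le> \<theta> x * \<gamma> x v * ((f x)\<^sup>2 + (g (x + v))\<^sup>2)"
      using p by (intro mult_left_mono abs_mult_le_sum_squares) auto
    finally show ?thesis
      using p by (simp add: ennreal_mult[symmetric] ennreal_plus[symmetric] algebra_simps del: ennreal_plus)
  qed
  have inner: "(\<integral>\<^sup>+y. ennreal \<bar>f x * \<theta> x * (\<gamma> x (y - x) * g y)\<bar> \<partial>lborel)
      \<le> ennreal (\<theta> x * (f x)\<^sup>2) + ennreal (\<theta> x) * G x" for x
  proof -
    have "(\<integral>\<^sup>+y. ennreal \<bar>f x * \<theta> x * (\<gamma> x (y - x) * g y)\<bar> \<partial>lborel)
        = (\<integral>\<^sup>+v. ennreal \<bar>f x * \<theta> x * (\<gamma> x v * g (x + v))\<bar> \<partial>lborel)"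
      by (subst nn_integral_lborel_translate[of _ x]) simp_all
    also have "\<dots> \<le> (\<integral>\<^sup>+v. ennreal (\<theta> x * (f x)\<^sup>2) * ennreal (\<gamma> x v)
        + ennreal (\<theta> x) * (ennreal (\<gamma> x v) * ennreal ((g (x + v))\<^sup>2)) \<partial>lborel)"
      by (rule nn_integral_mono) (rule pw)
    also have "\<dots> = ennreal (\<theta> x * (f x)\<^sup>2) + ennreal (\<theta> x) * G x"
      by (subst nn_integral_add) (simp_all add: nn_integral_cmult nn_integral_gamma G_def)
    finally show ?thesis .
  qed
  have "(\<integral>\<^sup>+x. indicator unit_cell x * (\<integral>\<^sup>+y. ennreal \<bar>f x * \<theta> x * (\<gamma> x (y - x) * g y)\<bar> \<partial>lborel) \<partial>lborel)
      \<le> (\<integral>\<^sup>+x. indicator unit_cell x * ennreal (\<theta> x * (f x)\<^sup>2)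
        + indicator unit_cell x * (ennreal (\<theta> x) * G x) \<partial>lborel)"
    by (intro nn_integral_mono) (simp add: distrib_left[symmetric] mult_left_mono inner)
  also have "\<dots> = sqnorm_nn f + sqnorm_nn g"
    by (subst nn_integral_add) (simp_all add: sqnorm_nn_def G_def sqnorm_nn_gamma_average gp)
  finally show ?thesis .
qed

lemma integral_unit_cell_opF_adjoint:
  assumes f: "periodic_L2 f" and g: "periodic_L2 g"
  shows "(\<integral>x. indicator unit_cell x * (f x * \<theta> x * opF \<gamma> g x) \<partial>lborel)
       = (\<integral>y. indicator unit_cell y * (g y * \<theta> y * opFstar Q f y) \<partial>lborel)"
proof -
  have [measurable]: "f \<in> borel_measurable borel" "g \<in> borel_measurable borel"
    and fp: "\<And>x k. f (x + lattice_point k) = f x" and gp: "\<And>x k. g (x + lattice_point k) = g x"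
    and fN: "sqnorm_nn f < \<infinity>" and gN: "sqnorm_nn g < \<infinity>" using f g by (auto simp: periodic_L2_def)
  have [measurable]: "f \<in> borel_measurable lborel" "g \<in> borel_measurable lborel"
    by (simp_all add: measurable_lborel1)
  define \<Phi> where "\<Phi> x y = f x * \<theta> x * (\<gamma> x (y - x) * g y)" for x y
  have "(\<lambda>z. f (fst z) * \<theta> (fst z) * (\<gamma> (fst z) (snd z - fst z) * g (snd z))) \<in> borel_measurable borel"
    unfolding borel_measurable_lborel_pair_iff[symmetric] by measurable
  then have meas: "case_prod \<Phi> \<in> borel_measurable borel"
    by (simp add: \<Phi>_def case_prod_beta')
  have diag: "\<Phi> (x + lattice_point k) (y + lattice_point k) = \<Phi> x y" for x y k
    by (simp add: \<Phi>_def theta_periodic gamma_periodic fp gp)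
  have fin: "(\<integral>\<^sup>+x. indicator unit_cell x * (\<integral>\<^sup>+y. ennreal \<bar>\<Phi> x y\<bar> \<partial>lborel) \<partial>lborel) < \<infinity>"
    using nn_integral_unit_cell_abs_product_le[OF f g] fN gN
    by (simp add: \<Phi>_def order_le_less_trans)
  have "(\<integral>y. \<Phi> x y \<partial>lborel) = f x * \<theta> x * opF \<gamma> g x" for x
    using integral_lborel_translate[of "\<lambda>y. \<gamma> x (y - x) * g y" x] by (simp add: \<Phi>_def opF_def)
  moreover have "(\<integral>x. \<Phi> x y \<partial>lborel) = g y * \<theta> y * opFstar Q f y" for y
  proof -
    have "(\<integral>x. \<Phi> x y \<partial>lborel) = (\<integral>w. \<Phi> (y - w) y \<partial>lborel)"
      by (rule integral_lborel_reflect) (use borel_measurable_curry2[OF meas] in simp)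
    also have "\<dots> = (\<integral>w. (g y * \<theta> y) * (Q y w * f (y - w)) \<partial>lborel)"
      by (rule Bochner_Integration.integral_cong) (auto simp: \<Phi>_def mult_ac theta_mult_Q[symmetric])
    finally show ?thesis by (simp add: opFstar_def)
  qed
  ultimately show ?thesis using integral_unit_cell_swap[OF meas diag fin] by simp
qed

lemma cell_theta_integrable: "integrable lborel (\<lambda>y. indicator unit_cell y * \<theta> y)"
  and cell_theta_integral: "(\<integral>y. indicator unit_cell y * \<theta> y \<partial>lborel) = 1"
  and cell_theta_nn_integral: "(\<integral>\<^sup>+y. indicator unit_cell y * ennreal (\<theta> y) \<partial>lborel) = 1"
proof -
  show o: "(\<integral>y. indicator unit_cell y * \<theta> y \<partial>lborel) = 1" using theta_prob torus_integral_eq_cell_integral[OF theta_measurable] by simp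
  show i: "integrable lborel (\<lambda>y. indicator unit_cell y * \<theta> y)"
    using o not_integrable_integral_eq by fastforce
  have "(\<integral>\<^sup>+y. ennreal (indicator unit_cell y * \<theta> y) \<partial>lborel) = ennreal 1"
    by (subst nn_integral_eq_integral[OF i]) (use theta_pos o in \<open>auto simp: less_imp_le\<close>)
  then show "(\<integral>\<^sup>+y. indicator unit_cell y * ennreal (\<theta> y) \<partial>lborel) = 1"
    by (simp only: indicator_mult_ennreal[symmetric] ennreal_1)
qed


lemma periodic_L2_integrable_square:
  assumes "periodic_L2 h"
  shows "integrable lborel (\<lambda>y. indicator unit_cell y * (\<theta> y * (h y)\<^sup>2))"
proof -
  have [measurable]: "h \<in> borel_measurable borel" using assms by (simp add: periodic_L2_def)
  show ?thesis
    by (rule integrableI_nonneg) (use assms theta_pos in \<open>auto simp: periodic_L2_def sqnorm_nn_def indicator_mult_ennreal[symmetric] less_imp_le\<close>)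
qed

lemma periodic_L2_integrable:
  assumes "periodic_L2 h"
  shows "integrable lborel (\<lambda>y. indicator unit_cell y * (\<theta> y * h y))"
proof (rule Bochner_Integration.integrable_bound[OF Bochner_Integration.integrable_add[OF
      cell_theta_integrable periodic_L2_integrable_square[OF assms]]])
  have [measurable]: "h \<in> borel_measurable borel" using assms by (simp add: periodic_L2_def)
  show "(\<lambda>y. indicator unit_cell y * (\<theta> y * h y)) \<in> borel_measurable lborel" by measurable
  have "\<bar>\<theta> x * h x\<bar> \<le> \<bar>\<theta> x * (1 + (h x)\<^sup>2)\<bar>" for x
    using theta_pos[of x] abs_mult_le_sum_squares[of 1 "h x"] by (simp add: abs_mult mult_left_mono)
  then show "AE x in lborel. norm (indicator unit_cell x * (\<theta> x * h x))
      \<le> norm (indicator unit_cell x * \<theta> x + indicator unit_cell x * (\<theta> x * (h x)\<^sup>2))"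
    by (intro AE_I2) (simp add: indicator_def distrib_left)
qed
section \<open>Doeblin minorisation and the spectral gap\<close>

definition cell_mean :: "(real^'n \<Rightarrow> real) \<Rightarrow> real" where
  "cell_mean h = (\<integral>y. indicator unit_cell y * (\<theta> y * h y) \<partial>lborel)"

definition doeblin_constant :: "real \<Rightarrow> bool" where
  "doeblin_constant m \<longleftrightarrow> 0 < m \<and> m < 1 \<and> (\<forall>x\<in>unit_cell. \<forall>y\<in>unit_cell. m * \<theta> y \<le> \<gamma> x (y - x))"

lemma doeblin_constant_exists: "\<exists>m. doeblin_constant m"
proof -
  let ?S = "cbox 0 (One::real^'n) \<times> cbox 0 (One::real^'n)"
  let ?r = "\<lambda>z::(real^'n)\<times>(real^'n). \<gamma> (fst z) (snd z - fst z) / \<theta> (snd z)"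
  have num: "continuous_on UNIV (\<lambda>z::(real^'n)\<times>(real^'n). \<gamma> (fst z) (snd z - fst z))"
    by (rule continuous_on_gamma_compose) (intro continuous_intros)+
  have den: "continuous_on UNIV (\<lambda>z::(real^'n)\<times>(real^'n). \<theta> (snd z))"
    by (rule continuous_on_compose2[OF theta_cont continuous_on_snd]) auto
  have "continuous_on UNIV ?r"
    by (rule continuous_on_divide[OF num den]) (simp add: theta_nonzero)
  then have cont: "continuous_on ?S ?r" by (rule continuous_on_subset) simp
  have "compact ?S" by (intro compact_Times compact_cbox)
  moreover have "?S \<noteq> {}" by (auto simp: mem_box_cart)
  ultimately obtain z0 where z0: "\<And>z. z \<in> ?S \<Longrightarrow> ?r z0 \<le> ?r z"
    using continuous_attains_inf[OF _ _ cont] by blast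
  define m where "m = min (?r z0) (1/2)"
  have "0 < m" using gamma_pos theta_pos by (simp add: m_def)
  moreover have "m < 1" by (simp add: m_def)
  moreover have "m * \<theta> y \<le> \<gamma> x (y - x)" if "x \<in> unit_cell" "y \<in> unit_cell" for x y
  proof -
    have "(x, y) \<in> ?S" using that unit_cell_subset_cbox by auto
    then have "m \<le> ?r (x, y)" using z0[of "(x,y)"] by (simp add: m_def)
    then show ?thesis using theta_pos[of y] by (simp add: field_simps)
  qed
  ultimately show ?thesis unfolding doeblin_constant_def by blast
qed

text \<open>The part of the kernel \<open>\<gamma> x\<close> which the Doeblin constant \<open>m\<close> guarantees: \<open>m\<close> times
  the stationary density, restricted to the cell and seen from \<open>x\<close>.\<close>

definition doeblin_density :: "real \<Rightarrow> real^'n \<Rightarrow> real^'n \<Rightarrow> real" where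
  "doeblin_density m x v = m * (indicator unit_cell (x + v) * \<theta> (x + v))"

lemma doeblin_density_le_gamma:
  assumes "doeblin_constant m" and "x \<in> unit_cell"
  shows "doeblin_density m x v \<le> \<gamma> x v"
proof (cases "x + v \<in> unit_cell")
  case True
  with assms have "m * \<theta> (x + v) \<le> \<gamma> x (x + v - x)" unfolding doeblin_constant_def by blast
  with True show ?thesis by (simp add: doeblin_density_def)
next
  case False
  then show ?thesis using gamma_pos[of x v] by (simp add: doeblin_density_def less_imp_le)
qed

lemma doeblin_density_nonneg: "0 \<le> m \<Longrightarrow> 0 \<le> doeblin_density m x v"
  using theta_pos[of "x + v"] by (simp add: doeblin_density_def)

lemma integrable_doeblin_density: "integrable lborel (doeblin_density m x)"
  unfolding doeblin_density_def
  by (intro integrable_mult_right integrable_lborel_translate[OF cell_theta_integrable])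

lemma integral_doeblin_density: "(\<integral>v. doeblin_density m x v \<partial>lborel) = m"
  using integral_lborel_translate[of "\<lambda>y. indicator unit_cell y * \<theta> y" x] cell_theta_integral
  by (simp add: doeblin_density_def)

lemma nn_integral_doeblin_density_square:
  assumes "0 \<le> m" and [measurable]: "h \<in> borel_measurable borel"
  shows "(\<integral>\<^sup>+v. ennreal (doeblin_density m x v * (h (x + v))\<^sup>2) \<partial>lborel) = ennreal m * sqnorm_nn h"
proof -
  have "(\<integral>\<^sup>+v. ennreal (doeblin_density m x v * (h (x + v))\<^sup>2) \<partial>lborel)
      = (\<integral>\<^sup>+v. ennreal m * (indicator unit_cell (x + v) * ennreal (\<theta> (x + v) * (h (x + v))\<^sup>2)) \<partial>lborel)"
    using assms(1) theta_pos
    by (intro nn_integral_cong)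
       (simp add: doeblin_density_def indicator_mult_ennreal ennreal_mult[symmetric] less_imp_le mult_ac)
  also have "\<dots> = ennreal m * (\<integral>\<^sup>+v. indicator unit_cell (x + v) * ennreal (\<theta> (x + v) * (h (x + v))\<^sup>2) \<partial>lborel)"
    by (rule nn_integral_cmult) measurable
  also have "(\<integral>\<^sup>+v. indicator unit_cell (x + v) * ennreal (\<theta> (x + v) * (h (x + v))\<^sup>2) \<partial>lborel) = sqnorm_nn h"
    unfolding sqnorm_nn_def by (rule nn_integral_lborel_translate[symmetric]) measurable
  finally show ?thesis .
qed

lemma doeblin_density_mean:
  assumes h: "periodic_L2 h"
  shows "integrable lborel (\<lambda>v. doeblin_density m x v * h (x + v))"
    and "(\<integral>v. doeblin_density m x v * h (x + v) \<partial>lborel) = m * cell_mean h"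
proof -
  have [measurable]: "h \<in> borel_measurable borel" using h by (simp add: periodic_L2_def)
  have "integrable lborel (\<lambda>v. m * (indicator unit_cell (x + v) * (\<theta> (x + v) * h (x + v))))"
    by (intro integrable_mult_right integrable_lborel_translate[OF periodic_L2_integrable[OF h]])
  then show "integrable lborel (\<lambda>v. doeblin_density m x v * h (x + v))"
    by (simp add: doeblin_density_def mult_ac)
  have "(\<integral>v. indicator unit_cell (x + v) * (\<theta> (x + v) * h (x + v)) \<partial>lborel) = cell_mean h"
    unfolding cell_mean_def by (rule integral_lborel_translate[symmetric]) measurable
  then show "(\<integral>v. doeblin_density m x v * h (x + v) \<partial>lborel) = m * cell_mean h"
    by (simp add: doeblin_density_def mult_ac)
qed

text \<open>Splitting \<open>\<gamma> x = w + \<nu>\<close> with \<open>\<nu>\<close> the Doeblin density, Cauchy--Schwarz with respect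
  to \<open>w\<close> (of mass \<open>1 - m\<close>) controls \<open>F h x\<close>, because \<open>\<nu>\<close> sees only the mean of \<open>h\<close>, which
  vanishes.\<close>

lemma opF_square_doeblin_le:
  assumes m: "doeblin_constant m" and x: "x \<in> unit_cell"
    and h: "periodic_L2 h" and h_mean: "cell_mean h = 0"
  shows "ennreal ((opF \<gamma> h x)\<^sup>2) + ennreal (1 - m) * (ennreal m * sqnorm_nn h)
      \<le> ennreal (1 - m) * (\<integral>\<^sup>+v. ennreal (\<gamma> x v) * ennreal ((h (x + v))\<^sup>2) \<partial>lborel)"
proof -
  have [measurable]: "h \<in> borel_measurable borel" using h by (simp add: periodic_L2_def)
  have m0: "0 \<le> m" using m by (simp add: doeblin_constant_def)
  define \<nu> where "\<nu> = doeblin_density m x"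
  define w where "w v = \<gamma> x v - \<nu> v" for v
  have \<nu>0: "0 \<le> \<nu> v" for v using doeblin_density_nonneg[OF m0] by (simp add: \<nu>_def)
  have w0: "0 \<le> w v" for v using doeblin_density_le_gamma[OF m x] by (simp add: w_def \<nu>_def)
  have wi: "integrable lborel w" unfolding w_def[abs_def] \<nu>_def
    by (rule Bochner_Integration.integrable_diff[OF gamma_integrable integrable_doeblin_density])
  have [measurable]: "\<nu> \<in> borel_measurable lborel" "w \<in> borel_measurable lborel"
    using borel_measurable_integrable[OF integrable_doeblin_density] borel_measurable_integrable[OF wi]
    by (simp_all add: \<nu>_def)
  have "(\<integral>v. w v \<partial>lborel) = 1 - m" unfolding w_def[abs_def] \<nu>_def
    using Bochner_Integration.integral_diff[OF gamma_integrable integrable_doeblin_density]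
    by (simp add: gamma_one integral_doeblin_density)
  then have cs: "ennreal ((\<integral>v. w v * h (x + v) \<partial>lborel)\<^sup>2)
      \<le> ennreal (1 - m) * (\<integral>\<^sup>+v. ennreal (w v * (h (x + v))\<^sup>2) \<partial>lborel)"
    using weighted_integral_square_le[OF w0 wi, of "\<lambda>v. h (x + v)"] by simp
  have "(\<integral>\<^sup>+v. ennreal (\<gamma> x v) * ennreal ((h (x + v))\<^sup>2) \<partial>lborel)
      = (\<integral>\<^sup>+v. ennreal (w v * (h (x + v))\<^sup>2) + ennreal (\<nu> v * (h (x + v))\<^sup>2) \<partial>lborel)"
  proof (rule nn_integral_cong)
    fix v
    have "ennreal (\<gamma> x v) * ennreal ((h (x + v))\<^sup>2) = ennreal (w v * (h (x + v))\<^sup>2 + \<nu> v * (h (x + v))\<^sup>2)"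
      using gamma_pos[of x v] by (simp add: ennreal_mult[symmetric] w_def algebra_simps less_imp_le)
    also have "\<dots> = ennreal (w v * (h (x + v))\<^sup>2) + ennreal (\<nu> v * (h (x + v))\<^sup>2)"
      using w0[of v] \<nu>0[of v] by (intro ennreal_plus) auto
    finally show "ennreal (\<gamma> x v) * ennreal ((h (x + v))\<^sup>2)
        = ennreal (w v * (h (x + v))\<^sup>2) + ennreal (\<nu> v * (h (x + v))\<^sup>2)" .
  qed
  also have "\<dots> = (\<integral>\<^sup>+v. ennreal (w v * (h (x + v))\<^sup>2) \<partial>lborel) + (\<integral>\<^sup>+v. ennreal (\<nu> v * (h (x + v))\<^sup>2) \<partial>lborel)"
    by (rule nn_integral_add) measurable
  also have "(\<integral>\<^sup>+v. ennreal (\<nu> v * (h (x + v))\<^sup>2) \<partial>lborel) = ennreal m * sqnorm_nn h"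
    unfolding \<nu>_def by (rule nn_integral_doeblin_density_square[OF m0]) measurable
  finally have split: "ennreal (1 - m) * (\<integral>\<^sup>+v. ennreal (\<gamma> x v) * ennreal ((h (x + v))\<^sup>2) \<partial>lborel)
      = ennreal (1 - m) * (\<integral>\<^sup>+v. ennreal (w v * (h (x + v))\<^sup>2) \<partial>lborel) + ennreal (1 - m) * (ennreal m * sqnorm_nn h)"
    by (simp add: distrib_left)
  show ?thesis
  proof (cases "integrable lborel (\<lambda>v. \<gamma> x v * h (x + v))")
    case True
    have "opF \<gamma> h x = (\<integral>v. \<gamma> x v * h (x + v) - \<nu> v * h (x + v) \<partial>lborel)"
      using doeblin_density_mean[OF h, of m x] h_mean True
      by (simp add: opF_def \<nu>_def Bochner_Integration.integral_diff)
    also have "\<dots> = (\<integral>v. w v * h (x + v) \<partial>lborel)" by (simp add: w_def algebra_simps)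
    finally show ?thesis using cs split by (simp add: add_right_mono)
  next
    case False
    then have "opF \<gamma> h x = 0" by (simp add: opF_def not_integrable_integral_eq)
    then show ?thesis unfolding split by (simp add: add_increasing)
  qed
qed

lemma sqnorm_nn_opF_contraction:
  assumes m: "doeblin_constant m" and h: "periodic_L2 h" and h_mean: "cell_mean h = 0"
  shows "sqnorm_nn (opF \<gamma> h) \<le> ennreal ((1 - m)\<^sup>2) * sqnorm_nn h"
proof -
  have hm[measurable]: "h \<in> borel_measurable borel" and hp: "\<And>x k. h (x + lattice_point k) = h x"
    and hN: "sqnorm_nn h < \<infinity>" using h by (auto simp: periodic_L2_def)
  have m1: "0 \<le> 1 - m" "0 \<le> m" using m by (auto simp: doeblin_constant_def)
  have [measurable]: "opF \<gamma> h \<in> borel_measurable lborel"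
    using opF_measurable[OF hm] by (simp add: measurable_lborel1)
  have [measurable]: "(\<lambda>x. \<integral>\<^sup>+v. ennreal (\<gamma> x v) * ennreal ((h (x + v))\<^sup>2) \<partial>lborel) \<in> borel_measurable lborel"
    by (rule gamma_average_measurable[OF hm])
  define c where "c = ennreal (1 - m) * (ennreal m * sqnorm_nn h)"
  have "sqnorm_nn (opF \<gamma> h) + c
      = (\<integral>\<^sup>+x. indicator unit_cell x * (ennreal (\<theta> x) * (ennreal ((opF \<gamma> h x)\<^sup>2) + c)) \<partial>lborel)"
  proof -
    have "(\<integral>\<^sup>+x. indicator unit_cell x * (ennreal (\<theta> x) * (ennreal ((opF \<gamma> h x)\<^sup>2) + c)) \<partial>lborel)
        = (\<integral>\<^sup>+x. indicator unit_cell x * ennreal (\<theta> x * (opF \<gamma> h x)\<^sup>2) + (indicator unit_cell x * ennreal (\<theta> x)) * c \<partial>lborel)"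
      using theta_pos by (intro nn_integral_cong) (simp add: ennreal_mult less_imp_le distrib_left mult_ac)
    also have "\<dots> = sqnorm_nn (opF \<gamma> h) + (\<integral>\<^sup>+x. indicator unit_cell x * ennreal (\<theta> x) \<partial>lborel) * c"
      unfolding sqnorm_nn_def by (subst nn_integral_add) (auto simp: nn_integral_multc)
    finally show ?thesis using cell_theta_nn_integral by simp
  qed
  also have "\<dots> \<le> (\<integral>\<^sup>+x. indicator unit_cell x * (ennreal (\<theta> x) * (ennreal (1 - m)
      * (\<integral>\<^sup>+v. ennreal (\<gamma> x v) * ennreal ((h (x + v))\<^sup>2) \<partial>lborel))) \<partial>lborel)"
    unfolding c_def
    by (intro nn_integral_mono, rename_tac x, case_tac "x \<in> unit_cell")
       (auto intro: mult_left_mono opF_square_doeblin_le[OF m _ h h_mean])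
  also have "\<dots> = ennreal (1 - m) * (\<integral>\<^sup>+x. indicator unit_cell x * (ennreal (\<theta> x)
      * (\<integral>\<^sup>+v. ennreal (\<gamma> x v) * ennreal ((h (x + v))\<^sup>2) \<partial>lborel)) \<partial>lborel)"
    by (subst nn_integral_cmult[symmetric]) (auto simp: mult_ac)
  also have "\<dots> = ennreal (1 - m) * sqnorm_nn h" by (simp add: sqnorm_nn_gamma_average[OF hm hp])
  finally have fin: "sqnorm_nn (opF \<gamma> h) + c \<le> ennreal (1 - m) * sqnorm_nn h" .
  obtain r where r: "sqnorm_nn h = ennreal r" "0 \<le> r" using hN by (cases "sqnorm_nn h") auto
  have "sqnorm_nn (opF \<gamma> h) < \<infinity>" using sqnorm_nn_opF_le[OF hm hp] hN by (simp add: order_le_less_trans)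
  then obtain a where a: "sqnorm_nn (opF \<gamma> h) = ennreal a" "0 \<le> a" by (cases "sqnorm_nn (opF \<gamma> h)") auto
  have "ennreal (a + (1 - m) * m * r) \<le> ennreal ((1 - m) * r)"
    using fin m1 r a unfolding c_def by (simp add: ennreal_mult[symmetric] ennreal_plus[symmetric] del: ennreal_plus)
  then have "a + (1 - m) * m * r \<le> (1 - m) * r" using m1 r by (simp add: ennreal_le_iff)
  then have "a \<le> (1 - m)\<^sup>2 * r" by (simp add: power2_eq_square algebra_simps)
  then show ?thesis using a r m1 by (simp add: ennreal_mult[symmetric] ennreal_leI)
qed

lemma periodic_L2_const: "periodic_L2 (\<lambda>_. 1)"
  unfolding periodic_L2_def sqnorm_nn_def using cell_theta_nn_integral by simp

lemma opFstar_const: "opFstar Q (\<lambda>_. 1) y = 1"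
  unfolding opFstar_def using Q_one by simp

lemma cell_mean_opF: "periodic_L2 u \<Longrightarrow> cell_mean (opF \<gamma> u) = cell_mean u"
  using integral_unit_cell_opF_adjoint[OF periodic_L2_const] by (simp add: cell_mean_def opFstar_const mult_ac)

lemma periodic_L2_opF_iterate: "periodic_L2 g \<Longrightarrow> periodic_L2 ((opF \<gamma> ^^ n) g)"
  by (induction n) (auto intro: periodic_L2_opF)

lemma periodic_L2_opFstar_iterate: "periodic_L2 g \<Longrightarrow> periodic_L2 ((opFstar Q ^^ n) g)"
  by (induction n) (auto intro: periodic_L2_opFstar)

lemma cell_mean_opF_iterate: "periodic_L2 g \<Longrightarrow> cell_mean ((opF \<gamma> ^^ n) g) = cell_mean g"
  by (induction n) (simp_all add: cell_mean_opF periodic_L2_opF_iterate)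

lemma sqnorm_nn_opF_iterate_le:
  assumes m: "doeblin_constant m" and g: "periodic_L2 g" and g_mean: "cell_mean g = 0"
  shows "sqnorm_nn ((opF \<gamma> ^^ n) g) \<le> ennreal (((1 - m)\<^sup>2) ^ n) * sqnorm_nn g"
proof (induction n)
  case (Suc n)
  have "sqnorm_nn ((opF \<gamma> ^^ Suc n) g) \<le> ennreal ((1 - m)\<^sup>2) * sqnorm_nn ((opF \<gamma> ^^ n) g)"
    using sqnorm_nn_opF_contraction[OF m periodic_L2_opF_iterate[OF g]] cell_mean_opF_iterate[OF g] g_mean
    by simp
  also have "\<dots> \<le> ennreal ((1 - m)\<^sup>2) * (ennreal (((1 - m)\<^sup>2) ^ n) * sqnorm_nn g)"
    using Suc by (intro mult_left_mono) auto
  finally show ?case by (simp add: ennreal_mult mult.assoc)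
qed simp
lemma integral_unit_cell_iterate_adjoint:
  assumes f: "periodic_L2 f" and g: "periodic_L2 g"
  shows "(\<integral>x. indicator unit_cell x * (g x * (opFstar Q ^^ n) f x * \<theta> x) \<partial>lborel)
       = (\<integral>x. indicator unit_cell x * (f x * (opF \<gamma> ^^ n) g x * \<theta> x) \<partial>lborel)"
  using f
proof (induction n arbitrary: f)
  case 0 then show ?case by (simp add: mult_ac)
next
  case (Suc n)
  have e1: "(opFstar Q ^^ Suc n) f = (opFstar Q ^^ n) (opFstar Q f)" by (simp only: funpow_Suc_right o_def)
  have "(\<integral>x. indicator unit_cell x * (g x * (opFstar Q ^^ Suc n) f x * \<theta> x) \<partial>lborel)
      = (\<integral>x. indicator unit_cell x * (opFstar Q f x * (opF \<gamma> ^^ n) g x * \<theta> x) \<partial>lborel)"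
    unfolding e1 by (rule Suc.IH[OF periodic_L2_opFstar[OF Suc.prems]])
  also have "\<dots> = (\<integral>x. indicator unit_cell x * ((opF \<gamma> ^^ n) g x * \<theta> x * opFstar Q f x) \<partial>lborel)"
    by (simp add: mult_ac)
  also have "\<dots> = (\<integral>x. indicator unit_cell x * (f x * \<theta> x * opF \<gamma> ((opF \<gamma> ^^ n) g) x) \<partial>lborel)"
    using integral_unit_cell_opF_adjoint[OF Suc.prems periodic_L2_opF_iterate[OF g, of n]] by simp
  also have "\<dots> = (\<integral>x. indicator unit_cell x * (f x * (opF \<gamma> ^^ Suc n) g x * \<theta> x) \<partial>lborel)"
    by (simp add: mult_ac)
  finally show ?case .
qed

definition sqnorm :: "(real^'n \<Rightarrow> real) \<Rightarrow> real" where
  "sqnorm h = (\<integral>y. indicator unit_cell y * (\<theta> y * (h y)\<^sup>2) \<partial>lborel)"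

lemma sqnorm_nn_eq: "periodic_L2 h \<Longrightarrow> sqnorm_nn h = ennreal (sqnorm h)"
  unfolding sqnorm_nn_def sqnorm_def
  by (subst nn_integral_eq_integral[OF periodic_L2_integrable_square, symmetric]) (use theta_pos in \<open>auto simp: less_imp_le indicator_mult_ennreal[symmetric]\<close>)

lemma sqnorm_nonneg: "0 \<le> sqnorm h"
  unfolding sqnorm_def by (rule Bochner_Integration.integral_nonneg) (use theta_pos in \<open>auto simp: less_imp_le\<close>)

lemma abs_integral_unit_cell_le:
  assumes f: "periodic_L2 f" and u: "periodic_L2 u" and t: "0 < t"
  shows "\<bar>\<integral>x. indicator unit_cell x * (f x * u x * \<theta> x) \<partial>lborel\<bar> \<le> (t * sqnorm f + sqnorm u / t) / 2"
proof -
  have [measurable]: "f \<in> borel_measurable borel" "u \<in> borel_measurable borel" using f u by (auto simp: periodic_L2_def)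
  define B where "B x = (t / 2) * (indicator unit_cell x * (\<theta> x * (f x)\<^sup>2)) + (1 / (2 * t)) * (indicator unit_cell x * (\<theta> x * (u x)\<^sup>2))" for x
  have Bi: "integrable lborel B"
    unfolding B_def[abs_def] by (intro Bochner_Integration.integrable_add integrable_mult_right periodic_L2_integrable_square f u)
  have pw: "\<bar>indicator unit_cell x * (f x * u x * \<theta> x)\<bar> \<le> B x" for x
  proof -
    have "2 * (t * \<bar>f x\<bar>) * \<bar>u x\<bar> \<le> (t * \<bar>f x\<bar>)\<^sup>2 + \<bar>u x\<bar>\<^sup>2" by (rule sum_squares_bound)
    then have "\<bar>f x * u x\<bar> \<le> (t / 2) * (f x)\<^sup>2 + (1 / (2 * t)) * (u x)\<^sup>2"
      using t by (simp add: field_simps power2_eq_square abs_mult)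
    then have "\<theta> x * \<bar>f x * u x\<bar> \<le> \<theta> x * ((t / 2) * (f x)\<^sup>2 + (1 / (2 * t)) * (u x)\<^sup>2)"
      using theta_pos[of x] by (intro mult_left_mono) auto
    then show ?thesis using theta_pos[of x]
      by (auto simp: B_def indicator_def abs_mult algebra_simps)
  qed
  have [measurable]: "f \<in> borel_measurable lborel" "u \<in> borel_measurable lborel" by (simp_all add: measurable_lborel1)
  have Xm: "(\<lambda>x. indicator unit_cell x * (f x * u x * \<theta> x)) \<in> borel_measurable lborel" by measurable
  have Xi: "integrable lborel (\<lambda>x. indicator unit_cell x * (f x * u x * \<theta> x))"
  proof (rule Bochner_Integration.integrable_bound[OF Bi Xm], rule AE_I2)
    fix x
    show "norm (indicator unit_cell x * (f x * u x * \<theta> x)) \<le> norm (B x)"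
      using pw[of x] abs_ge_self[of "B x"] by (simp only: real_norm_def)
  qed
  have "\<bar>\<integral>x. indicator unit_cell x * (f x * u x * \<theta> x) \<partial>lborel\<bar> \<le> (\<integral>x. B x \<partial>lborel)"
    by (rule integral_abs_bound_integral[OF Xi Bi pw])
  also have "(\<integral>x. B x \<partial>lborel) = (t / 2) * sqnorm f + (1 / (2 * t)) * sqnorm u"
    unfolding B_def sqnorm_def
    by (subst Bochner_Integration.integral_add) (auto intro!: integrable_mult_right periodic_L2_integrable_square f u)
  also have "\<dots> = (t * sqnorm f + sqnorm u / t) / 2" using t by (simp add: field_simps)
  finally show ?thesis .
qed

section \<open>Decay of correlations\<close>

lemma periodic_L2_if_L2_theta:
  assumes "L2_theta \<theta> f"
  shows "periodic_L2 f"
proof -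
  have tf: "torus_fun f" and fm: "f \<in> borel_measurable lborel"
    and si: "set_integrable lborel (cbox 0 One) (\<lambda>x. (f x)\<^sup>2 * \<theta> x)"
    using assms by (auto simp: L2_theta_def)
  have fin: "(\<integral>\<^sup>+x. ennreal (norm (indicator (cbox 0 One) x *\<^sub>R ((f x)\<^sup>2 * \<theta> x))) \<partial>lborel) < \<infinity>"
    using si unfolding set_integrable_def integrable_iff_bounded by simp
  have "sqnorm_nn f \<le> (\<integral>\<^sup>+x. ennreal (norm (indicator (cbox 0 One) x *\<^sub>R ((f x)\<^sup>2 * \<theta> x))) \<partial>lborel)"
    unfolding sqnorm_nn_def
  proof (rule nn_integral_mono)
    fix x
    show "indicator unit_cell x * ennreal (\<theta> x * (f x)\<^sup>2)
        \<le> ennreal (norm (indicator (cbox 0 One) x *\<^sub>R ((f x)\<^sup>2 * \<theta> x)))"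
      using unit_cell_subset_cbox theta_pos[of x]
      by (cases "x \<in> unit_cell") (auto simp: abs_mult mult.commute)
  qed
  with fin have "sqnorm_nn f < \<infinity>" by (simp add: order_le_less_trans)
  then show ?thesis
    unfolding periodic_L2_def using fm torus_fun_lattice_point[OF tf] by (simp add: measurable_lborel1)
qed

lemma backward_corr_eq_cell_integral:
  assumes f: "periodic_L2 f" and g: "periodic_L2 g"
  shows "backward_corr \<theta> Q g f n = (\<integral>x. indicator unit_cell x * (f x * (opF \<gamma> ^^ n) g x * \<theta> x) \<partial>lborel)"
proof -
  have [measurable]: "g \<in> borel_measurable borel" "(opFstar Q ^^ n) f \<in> borel_measurable borel"
    using g periodic_L2_opFstar_iterate[OF f, of n] by (auto simp: periodic_L2_def)
  have "backward_corr \<theta> Q g f n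
      = (\<integral>x. indicator unit_cell x * (g x * (opFstar Q ^^ n) f x * \<theta> x) \<partial>lborel)"
    unfolding backward_corr_def by (rule torus_integral_eq_cell_integral) measurable
  then show ?thesis using integral_unit_cell_iterate_adjoint[OF f g, of n] by simp
qed

lemma torus_integral_correlation_eq_cell_integral:
  assumes f: "periodic_L2 f" and g: "periodic_L2 g"
  shows "torus_integral (\<lambda>x. f x * (opF \<gamma> ^^ n) g x * \<theta> x)
       = (\<integral>x. indicator unit_cell x * (f x * (opF \<gamma> ^^ n) g x * \<theta> x) \<partial>lborel)"
proof -
  have [measurable]: "f \<in> borel_measurable borel" "(opF \<gamma> ^^ n) g \<in> borel_measurable borel"
    using f periodic_L2_opF_iterate[OF g, of n] by (auto simp: periodic_L2_def)
  show ?thesis by (rule torus_integral_eq_cell_integral) measurable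
qed

lemma abs_cell_correlation_le:
  assumes m: "doeblin_constant m" and f: "periodic_L2 f" and g: "periodic_L2 g"
    and g_mean: "cell_mean g = 0"
  shows "\<bar>\<integral>x. indicator unit_cell x * (f x * (opF \<gamma> ^^ n) g x * \<theta> x) \<partial>lborel\<bar>
       \<le> (sqnorm f + sqnorm g) / 2 * (1 - m) ^ n"
proof -
  define u where "u = (opF \<gamma> ^^ n) g"
  define t where "t = (1 - m) ^ n"
  have t: "0 < t" using m by (simp add: t_def doeblin_constant_def)
  have u: "periodic_L2 u" unfolding u_def by (rule periodic_L2_opF_iterate[OF g])
  have "sqnorm_nn u \<le> ennreal (((1 - m)\<^sup>2) ^ n) * sqnorm_nn g"
    using sqnorm_nn_opF_iterate_le[OF m g g_mean] by (simp add: u_def)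
  then have "sqnorm u \<le> t * t * sqnorm g"
    using sqnorm_nn_eq[OF u] sqnorm_nn_eq[OF g] sqnorm_nonneg
    by (simp add: t_def ennreal_mult[symmetric] ennreal_le_iff power_mult_distrib power2_eq_square)
  then have "sqnorm u / t \<le> t * sqnorm g"
    using t by (simp add: pos_divide_le_eq mult_ac)
  moreover have "\<bar>\<integral>x. indicator unit_cell x * (f x * u x * \<theta> x) \<partial>lborel\<bar> \<le> (t * sqnorm f + sqnorm u / t) / 2"
    by (rule abs_integral_unit_cell_le[OF f u t])
  ultimately show ?thesis
    unfolding u_def t_def by (simp add: algebra_simps)
qed

lemma correlation_decay:
  "\<exists>\<rho>. 0 < \<rho> \<and> \<rho> < 1 \<and>
    (\<forall>f g. L2_theta \<theta> f \<and> L2_theta \<theta> g \<and>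
        torus_integral (\<lambda>x. f x * \<theta> x) = 0 \<and> torus_integral (\<lambda>x. g x * \<theta> x) = 0 \<longrightarrow>
      (\<forall>n. backward_corr \<theta> Q g f n = torus_integral (\<lambda>x. f x * ((opF \<gamma> ^^ n) g) x * \<theta> x)) \<and>
      (\<exists>C. \<forall>n. \<bar>backward_corr \<theta> Q g f n\<bar> \<le> C * \<rho> ^ n))"
proof -
  obtain m where m: "doeblin_constant m"
    using doeblin_constant_exists by blast
  have decay: "(\<forall>n. backward_corr \<theta> Q g f n = torus_integral (\<lambda>x. f x * ((opF \<gamma> ^^ n) g) x * \<theta> x)) \<and>
      (\<exists>C. \<forall>n. \<bar>backward_corr \<theta> Q g f n\<bar> \<le> C * (1 - m) ^ n)"
    if "L2_theta \<theta> f" "L2_theta \<theta> g" "torus_integral (\<lambda>x. g x * \<theta> x) = 0" for f g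
  proof -
    have f: "periodic_L2 f" and g: "periodic_L2 g"
      using that periodic_L2_if_L2_theta by auto
    have [measurable]: "g \<in> borel_measurable borel" using g by (simp add: periodic_L2_def)
    have "cell_mean g = 0"
      using that(3) torus_integral_eq_cell_integral[of "\<lambda>x. g x * \<theta> x"] by (simp add: cell_mean_def mult_ac)
    note bound = abs_cell_correlation_le[OF m f g this]
    show ?thesis
      using backward_corr_eq_cell_integral[OF f g] torus_integral_correlation_eq_cell_integral[OF f g] bound
      by (simp del: times_divide_eq_left) blast
  qed
  have "0 < 1 - m" "1 - m < 1" using m by (auto simp: doeblin_constant_def)
  with decay show ?thesis by blast
qed

end

lemma torus_kernel_Gibbs:
  fixes U \<phi> \<phi>b \<theta> :: "real^'n \<Rightarrow> real" and \<gamma> Q :: "real^'n \<Rightarrow> real^'n \<Rightarrow> real"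
  assumes U: "torus_fun U" "continuous_on UNIV U" and eps_pos: "\<epsilon> > 0"
    and phi: "torus_fun \<phi>" "continuous_on UNIV \<phi>" and phib: "torus_fun \<phi>b" "continuous_on UNIV \<phi>b"
    and theta_def: "\<And>x. \<theta> x = exp (- (\<phi> x + \<phi>b x) / \<epsilon>)"
    and gamma_def: "\<And>x v. \<gamma> x v = exp (- (lagr U P x v + \<phi> (x + v) - \<phi> x - lam) / \<epsilon>)"
    and Q_def: "\<And>x v. Q x v = \<theta> (x - v) * \<gamma> (x - v) v / \<theta> x"
    and gamma_one: "\<And>x. (\<integral>v. \<gamma> x v \<partial>lborel) = 1" and Q_one: "\<And>x. (\<integral>v. Q x v \<partial>lborel) = 1"
    and theta_prob: "torus_integral \<theta> = 1"
  shows "torus_kernel \<theta> \<gamma> Q"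
proof
  have "\<theta> = (\<lambda>x. exp (- (\<phi> x + \<phi>b x) / \<epsilon>))" using theta_def by auto
  then show "continuous_on UNIV \<theta>" using eps_pos by (auto intro!: continuous_intros phi phib)
  show "torus_fun \<theta>" using phi(1) phib(1) by (simp add: torus_fun_def theta_def)
  show "\<theta> x > 0" for x by (simp add: theta_def)
  have gamma_eq: "(\<lambda>z. \<gamma> (fst z) (snd z)) = (\<lambda>z. exp (- ((norm (snd z))\<^sup>2 / 2 - U (fst z) + P \<bullet> snd z
      + \<phi> (fst z + snd z) - \<phi> (fst z) - lam) / \<epsilon>))"
    by (auto simp: gamma_def lagr_def)
  have "continuous_on UNIV (\<lambda>z::(real^'n)\<times>(real^'n). U (fst z))"
    "continuous_on UNIV (\<lambda>z::(real^'n)\<times>(real^'n). \<phi> (fst z))"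
    "continuous_on UNIV (\<lambda>z::(real^'n)\<times>(real^'n). \<phi> (fst z + snd z))"
    by (auto intro!: continuous_on_compose2[OF U(2)] continuous_on_compose2[OF phi(2)] continuous_intros)
  then show "continuous_on UNIV (\<lambda>z. \<gamma> (fst z) (snd z))"
    unfolding gamma_eq using eps_pos by (intro continuous_intros) auto
  show "\<gamma> x v > 0" for x v by (simp add: gamma_def)
  show "torus_fun (\<lambda>x. \<gamma> x v)" for v
    unfolding torus_fun_def
  proof (intro allI impI)
    fix x k :: "real^'n" assume k: "int_vec k"
    have "\<phi> (x + k + v) = \<phi> (x + v)"
      using phi(1) k unfolding torus_fun_def by (metis add.commute add.left_commute)
    then show "\<gamma> (x + k) v = \<gamma> x v"
      using U(1) phi(1) k unfolding torus_fun_def by (simp add: gamma_def lagr_def)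
  qed
qed (fact Q_def gamma_one Q_one theta_prob)+

theorem mainTheorem4:
  fixes U :: "real^'n \<Rightarrow> real" and P :: "real^'n" and \<epsilon> :: real
    and \<phi> \<phi>b :: "real^'n \<Rightarrow> real" and lam :: real
    and \<theta> :: "real^'n \<Rightarrow> real" and \<gamma> Q :: "real^'n \<Rightarrow> real^'n \<Rightarrow> real"
  assumes U_torus: "torus_fun U" and U_smooth: "smooth_fun U"
    and eps_pos: "\<epsilon> > 0"
    and phi_torus: "torus_fun \<phi>" and phi_diff: "\<phi> differentiable_on UNIV"
    and phib_torus: "torus_fun \<phi>b" and phib_diff: "\<phi>b differentiable_on UNIV"
    and phi_int: "\<And>x. integrable lborel (\<lambda>v. exp (- (lagr U P x v + \<phi> (x + v)) / \<epsilon>))"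
    and phi_eq: "\<And>x. - \<epsilon> * ln (\<integral>v. exp (- (lagr U P x v + \<phi> (x + v)) / \<epsilon>) \<partial>lborel)
                     = \<phi> x + lam"
    and phib_int: "\<And>x. integrable lborel (\<lambda>v. exp (- (lagr U P (x + v) (- v) + \<phi>b (x + v)) / \<epsilon>))"
    and phib_eq: "\<And>x. - \<epsilon> * ln (\<integral>v. exp (- (lagr U P (x + v) (- v) + \<phi>b (x + v)) / \<epsilon>) \<partial>lborel)
                     = \<phi>b x + lam"
    and theta_def: "\<And>x. \<theta> x = exp (- (\<phi> x + \<phi>b x) / \<epsilon>)"
    and theta_prob: "torus_integral \<theta> = 1"
    and gamma_def: "\<And>x v. \<gamma> x v = exp (- (lagr U P x v + \<phi> (x + v) - \<phi> x - lam) / \<epsilon>)"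
    and Q_def: "\<And>x v. Q x v = \<theta> (x - v) * \<gamma> (x - v) v / \<theta> x"
    and gamma_one: "\<And>x. (\<integral>v. \<gamma> x v \<partial>lborel) = 1"
    and Q_one: "\<And>x. (\<integral>v. Q x v \<partial>lborel) = 1"
    and holo: "holonomic (\<lambda>x v. \<theta> x * \<gamma> x v)"
    and fixpt_unique: "\<And>h. torus_fun h \<Longrightarrow> continuous_on UNIV h \<Longrightarrow> (\<forall>x. h x > 0) \<Longrightarrow>
        opF \<gamma> h = h \<Longrightarrow> \<exists>c. \<forall>x. h x = c"
  shows "\<exists>\<rho>. 0 < \<rho> \<and> \<rho> < 1 \<and>
    (\<forall>f g. L2_theta \<theta> f \<and> L2_theta \<theta> g \<and>
        torus_integral (\<lambda>x. f x * \<theta> x) = 0 \<and> torus_integral (\<lambda>x. g x * \<theta> x) = 0 \<longrightarrow>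
      (\<forall>n. backward_corr \<theta> Q g f n = torus_integral (\<lambda>x. f x * ((opF \<gamma> ^^ n) g) x * \<theta> x)) \<and>
      (\<exists>C. \<forall>n. \<bar>backward_corr \<theta> Q g f n\<bar> \<le> C * \<rho> ^ n))"
proof -
  have "U differentiable_on UNIV"
    using U_smooth unfolding smooth_fun_def by (metis foldr.simps(1) id_apply)
  then interpret torus_kernel \<theta> \<gamma> Q
    using torus_kernel_Gibbs[OF U_torus _ eps_pos phi_torus _ phib_torus _ theta_def gamma_def Q_def
        gamma_one Q_one theta_prob] phi_diff phib_diff
    by (simp add: differentiable_imp_continuous_on)
  show ?thesis by (rule correlation_decay)
qed
end
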